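(* Let $F$ be a field with $|F|\ge 4$, and let $G$ be a bipartite graph with $\mathcal{I}_F(G)\neq\emptyset$. Then for every positive integer $d$: $\mathcal{I}_F(G\Box Q_d)\neq\emptyset$, $f(G\Box Q_d)=2^{d-2}|V(G)|$, and $f(G\Box Q_d\Box C_{2k})=2^{d}|V(G)|$ for every integer $k\ge 2$.
   Context: All graphs are finite and simple. For a graph $H$ with a perfect matching $M$, a subset $S\subseteq M$ is a forcing set of $M$ if $S$ is contained in no other perfect matching of $H$; the forcing number $f(H,M)$ is the minimum size of a forcing set of $M$, and $f(H)$ is the minimum of $f(H,M)$ over all perfect matchings $M$ of $H$. A weighted adjacency matrix of a graph $G$ over a field $F$ is a matrix over $F$ with rows and columns indexed by $V(G)$ whose $(u,v)$ entry is nonzero iff $u$ and $v$ are adjacent in $G$. A matrix $A$ is involutory if $A^{-1}=A$. $\mathcal{I}_F(G)$ is the set of involutory weighted adjacency matrices of $G$ over $F$. $Q_d$ is the $d$-dimensional hypercube (vertex set $\{0,1\}^d$, two vectors adjacent iff they differ in exactly one coordinate). $C_{2k}$ is the cycle on $2k$ vertices. The Cartesian product $G\Box H$ has vertex set $V(G)\times V(H)$, with $(g_1,h_1)\sim(g_2,h_2)$ iff either $g_1=g_2$ and $h_1h_2\in E(H)$, or $h_1=h_2$ and $g_1g_2\in E(G)$. *)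

theory Defs
  imports Complex_Main
begin

type_synonym 'a graph = "'a set \<times> 'a set set"

definition verts :: "'a graph \<Rightarrow> 'a set" where "verts G = fst G"
definition edges :: "'a graph \<Rightarrow> 'a set set" where "edges G = snd G"

definition simple_graph :: "'a graph \<Rightarrow> bool" where
  "simple_graph G \<longleftrightarrow> finite (verts G) \<and>
     (\<forall>e\<in>edges G. e \<subseteq> verts G \<and> card e = 2)"

definition bipartite :: "'a graph \<Rightarrow> bool" where
  "bipartite G \<longleftrightarrow> (\<exists>X \<subseteq> verts G. \<forall>e\<in>edges G. card (e \<inter> X) = 1)"

definition adjacent :: "'a graph \<Rightarrow> 'a \<Rightarrow> 'a \<Rightarrow> bool" where
  "adjacent G u v \<longleftrightarrow> {u, v} \<in> edges G"

definition weighted_adj :: "'a graph \<Rightarrow> ('a \<Rightarrow> 'a \<Rightarrow> 'f::field) \<Rightarrow> bool" where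
  "weighted_adj G A \<longleftrightarrow>
     (\<forall>u v. (u \<notin> verts G \<or> v \<notin> verts G) \<longrightarrow> A u v = 0) \<and>
     (\<forall>u\<in>verts G. \<forall>v\<in>verts G. A u v \<noteq> 0 \<longleftrightarrow> adjacent G u v)"

definition involutory :: "'a set \<Rightarrow> ('a \<Rightarrow> 'a \<Rightarrow> 'f::field) \<Rightarrow> bool" where
  "involutory V A \<longleftrightarrow>
     (\<forall>u\<in>V. \<forall>v\<in>V. (\<Sum>w\<in>V. A u w * A w v) = (if u = v then 1 else 0))"

definition invol_adj :: "'a graph \<Rightarrow> ('a \<Rightarrow> 'a \<Rightarrow> 'f::field) set" where
  "invol_adj G = {A. weighted_adj G A \<and> involutory (verts G) A}"

definition perfect_matching :: "'a graph \<Rightarrow> 'a set set \<Rightarrow> bool" where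
  "perfect_matching H M \<longleftrightarrow> M \<subseteq> edges H \<and>
     (\<forall>v\<in>verts H. \<exists>!e. e \<in> M \<and> v \<in> e)"

definition forcing_set :: "'a graph \<Rightarrow> 'a set set \<Rightarrow> 'a set set \<Rightarrow> bool" where
  "forcing_set H M S \<longleftrightarrow> S \<subseteq> M \<and>
     (\<forall>M'. perfect_matching H M' \<and> S \<subseteq> M' \<longrightarrow> M' = M)"

definition forcing_number_of :: "'a graph \<Rightarrow> 'a set set \<Rightarrow> nat" where
  "forcing_number_of H M = (LEAST n. \<exists>S. forcing_set H M S \<and> card S = n)"

definition forcing_number :: "'a graph \<Rightarrow> nat" where
  "forcing_number H = (LEAST n. \<exists>M. perfect_matching H M \<and> forcing_number_of H M = n)"

definition cart :: "'a graph \<Rightarrow> 'b graph \<Rightarrow> ('a \<times> 'b) graph" where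
  "cart G H = (verts G \<times> verts H,
     {{(g, h1), (g, h2)} | g h1 h2. g \<in> verts G \<and> {h1, h2} \<in> edges H} \<union>
     {{(g1, h), (g2, h)} | g1 g2 h. h \<in> verts H \<and> {g1, g2} \<in> edges G})"

definition hypercube :: "nat \<Rightarrow> bool list graph" where
  "hypercube d = ({xs. length xs = d},
     {{xs, ys} | xs ys. length xs = d \<and> length ys = d \<and>
        card {i. i < d \<and> xs ! i \<noteq> ys ! i} = 1})"

definition cycle :: "nat \<Rightarrow> nat graph" where
  "cycle n = ({0..<n}, {{i, (i + 1) mod n} | i. i < n})"

end

theory Submission
  imports Defs
begin

text \<open>Let \<open>H\<close> be bipartite with a weighted adjacency matrix \<open>N\<close>, and let \<open>S\<close> force a perfect
  matching \<open>M\<close>. Deleting the \<open>2 |S|\<close> vertices covered by \<open>S\<close> leaves a bipartite graph with the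
  unique perfect matching \<open>M - S\<close>; such a graph has a pendant matched edge, so by induction
  the principal submatrix of \<open>N\<close> on the remaining vertices is nonsingular. Hence
  \<open>2 |S| \<ge> nullity N\<close>. For \<open>H \<box> K\<^sub>2\<close> with \<open>A\<close> involutory, \<open>[[A, I], [I, A]]\<close> has nullity
  \<open>|V(H)|\<close>; for \<open>H \<box> C\<^sub>2\<^sub>k\<close> a three-term matrix along the cycle has nullity \<open>2 |V(H)|\<close>.
  The matching upper bounds come from explicit forcing sets: the rungs over one color class
  of \<open>H\<close>, resp. one edge in each fibre over \<open>V(H)\<close>. Involutory matrices pass from \<open>H\<close> to
  \<open>H \<box> K\<^sub>2\<close> via \<open>[[-a A, (1 - a\<^sup>2) I], [I, a A]]\<close> with \<open>a \<notin> {0, 1, -1}\<close>, and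
  \<open>Q\<^sub>d\<^sub>+\<^sub>1 = Q\<^sub>d \<box> K\<^sub>2\<close>. The hypothesis \<open>|F| \<ge> 4\<close> provides \<open>a\<close> and a 4-coloring of the
  square of the cycle.\<close>

section \<open>Linear independence\<close>

text \<open>Nonsingularity of the principal
  submatrix of \<open>N\<close> on \<open>W\<close> is expressed as \<open>lin_indep W W (\<lambda>u v. N v u)\<close> (its columns).\<close>
definition lin_indep :: "'v set \<Rightarrow> 'i set \<Rightarrow> ('i \<Rightarrow> 'v \<Rightarrow> 'f::field) \<Rightarrow> bool" where
  "lin_indep V I x \<longleftrightarrow> (\<forall>a. (\<forall>v\<in>V. (\<Sum>i\<in>I. a i * x i v) = 0) \<longrightarrow> (\<forall>i\<in>I. a i = 0))"

lemma lin_indepD: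
  "lin_indep V I x \<Longrightarrow> (\<And>v. v \<in> V \<Longrightarrow> (\<Sum>i\<in>I. a i * x i v) = 0) \<Longrightarrow> i \<in> I \<Longrightarrow> a i = 0"
  unfolding lin_indep_def by blast

lemma lin_indep_insert_zero:
  assumes "lin_indep (insert v V) I x" and "\<forall>i\<in>I. x i v = 0"
  shows "lin_indep V I x"
  using assms unfolding lin_indep_def by auto

lemma lin_indep_eliminate:
  fixes x :: "'i \<Rightarrow> 'v \<Rightarrow> 'f::field"
  assumes fin: "finite I" and indep: "lin_indep (insert v V) I x"
    and i0: "i0 \<in> I" "x i0 v \<noteq> 0"
  shows "lin_indep V (I - {i0}) (\<lambda>i u. x i u - x i v / x i0 v * x i0 u)"
  unfolding lin_indep_def
proof (intro allI impI)
  fix a assume a: "\<forall>u\<in>V. (\<Sum>i\<in>I - {i0}. a i * (x i u - x i v / x i0 v * x i0 u)) = 0"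
  define a' where "a' i = (if i = i0 then - (\<Sum>j\<in>I - {i0}. a j * x j v) / x i0 v else a i)" for i
  have expand: "(\<Sum>i\<in>I. a' i * x i u) = (\<Sum>i\<in>I - {i0}. a i * (x i u - x i v / x i0 v * x i0 u))" for u
  proof -
    have "(\<Sum>i\<in>I. a' i * x i u) = a' i0 * x i0 u + (\<Sum>i\<in>I - {i0}. a' i * x i u)"
      using fin i0(1) by (simp add: sum.remove)
    also have "(\<Sum>i\<in>I - {i0}. a' i * x i u) = (\<Sum>i\<in>I - {i0}. a i * x i u)"
      unfolding a'_def by (rule sum.cong) auto
    also have "(\<Sum>i\<in>I - {i0}. a i * (x i u - x i v / x i0 v * x i0 u))
        = (\<Sum>i\<in>I - {i0}. a i * x i u) - (\<Sum>j\<in>I - {i0}. a j * x j v) / x i0 v * x i0 u"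
      by (simp add: algebra_simps sum_subtractf sum_distrib_right sum_divide_distrib sum_distrib_left)
    ultimately show ?thesis unfolding a'_def by simp
  qed
  have "(\<Sum>i\<in>I. a' i * x i u) = 0" if "u \<in> insert v V" for u
    using that a expand[of u] expand[of v] i0(2) by auto
  then have "\<forall>i\<in>I. a' i = 0" using indep unfolding lin_indep_def by blast
  then show "\<forall>i\<in>I - {i0}. a i = 0" unfolding a'_def by (metis DiffE singletonI)
qed

lemma card_le_card_if_lin_indep:
  assumes "finite V" "finite I" "lin_indep V I x"
  shows "card I \<le> card V"
  using assms
proof (induction V arbitrary: I x rule: finite_induct)
  case empty
  then have "I = {}" using lin_indepD[of "{}" I x "\<lambda>_. 1"] by auto
  then show ?case by simp
next
  case (insert v V)
  show ?case
  proof (cases "\<forall>i\<in>I. x i v = 0")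
    case True
    then have "card I \<le> card V"
      using insert.IH[OF insert.prems(1) lin_indep_insert_zero[OF insert.prems(2)]] by blast
    then show ?thesis using insert.hyps by simp
  next
    case False
    then obtain i0 where i0: "i0 \<in> I" "x i0 v \<noteq> 0" by blast
    then have "card (I - {i0}) \<le> card V"
      using insert.IH lin_indep_eliminate[OF insert.prems(1,2) i0] insert.prems(1) by blast
    then show ?thesis using insert.hyps i0 insert.prems(1) by (simp add: card_Diff_singleton)
  qed
qed

lemma lin_indep_unit_vectors_kernel:
  fixes N :: "'v \<Rightarrow> 'v \<Rightarrow> 'f::field" and \<kappa> :: "'z \<Rightarrow> 'v \<Rightarrow> 'f"
  assumes finV: "finite V" and WV: "W \<subseteq> V" and finZ: "finite Z"
    and nonsing: "lin_indep W W (\<lambda>u v. N v u)"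
    and kernel: "\<forall>z\<in>Z. \<forall>v\<in>V. (\<Sum>u\<in>V. N v u * \<kappa> z u) = 0"
    and indep: "lin_indep V Z \<kappa>"
  shows "lin_indep V (W <+> Z) (\<lambda>i. case i of Inl w \<Rightarrow> (\<lambda>v. if v = w then 1 else 0) | Inr z \<Rightarrow> \<kappa> z)"
    (is "lin_indep V (W <+> Z) ?x")
  unfolding lin_indep_def
proof (intro allI impI)
  fix a :: "'v + 'z \<Rightarrow> 'f"
  assume a: "\<forall>v\<in>V. (\<Sum>i\<in>W <+> Z. a i * ?x i v) = 0"
  have finW: "finite W" using finV WV finite_subset by blast
  define y where "y v = (if v \<in> W then a (Inl v) else 0) + (\<Sum>z\<in>Z. a (Inr z) * \<kappa> z v)" for v
  have y0: "y v = 0" if "v \<in> V" for v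
  proof -
    have "(\<Sum>w\<in>W. a (Inl w) * (if v = w then 1 else 0)) = (if v \<in> W then a (Inl v) else 0)"
      using finW by (simp add: if_distrib[of "\<lambda>t. a (Inl _) * t"] sum.delta' cong: if_cong)
    then have "(\<Sum>i\<in>W <+> Z. a i * ?x i v) = y v"
      using finW finZ by (simp add: sum.Plus y_def)
    then show ?thesis using a that by simp
  qed
  have rows: "(\<Sum>w\<in>W. a (Inl w) * N w' w) = 0" if w': "w' \<in> W" for w'
  proof -
    have "(\<Sum>u\<in>V. N w' u * (if u \<in> W then a (Inl u) else 0)) = (\<Sum>u\<in>V. if u \<in> W then N w' u * a (Inl u) else 0)"
      by (intro sum.cong) auto
    also have "\<dots> = (\<Sum>u\<in>W. N w' u * a (Inl u))"
      using finV WV by (simp add: sum.inter_restrict[symmetric] Int_absorb1)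
    finally have part1: "(\<Sum>u\<in>V. N w' u * (if u \<in> W then a (Inl u) else 0)) = (\<Sum>u\<in>W. N w' u * a (Inl u))" .
    have "(\<Sum>u\<in>V. N w' u * (\<Sum>z\<in>Z. a (Inr z) * \<kappa> z u)) = (\<Sum>z\<in>Z. a (Inr z) * (\<Sum>u\<in>V. N w' u * \<kappa> z u))"
      by (simp add: sum_distrib_left sum.swap[of _ V] mult.left_commute)
    also have "\<dots> = 0" using kernel w' WV by auto
    finally have part2: "(\<Sum>u\<in>V. N w' u * (\<Sum>z\<in>Z. a (Inr z) * \<kappa> z u)) = 0" .
    have "0 = (\<Sum>u\<in>V. N w' u * y u)" using y0 by simp
    also have "\<dots> = (\<Sum>u\<in>V. N w' u * (if u \<in> W then a (Inl u) else 0)) + (\<Sum>u\<in>V. N w' u * (\<Sum>z\<in>Z. a (Inr z) * \<kappa> z u))"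
      unfolding y_def by (simp add: distrib_left sum.distrib)
    finally show ?thesis using part1 part2 by (simp add: mult.commute)
  qed
  have aW: "a (Inl w) = 0" if "w \<in> W" for w
    using lin_indepD[OF nonsing, of "\<lambda>w. a (Inl w)"] rows that by blast
  then have "(\<Sum>z\<in>Z. a (Inr z) * \<kappa> z v) = 0" if "v \<in> V" for v
    using y0[OF that] aW unfolding y_def by (cases "v \<in> W") auto
  then have "a (Inr z) = 0" if "z \<in> Z" for z
    using lin_indepD[OF indep, of "\<lambda>z. a (Inr z)"] that by blast
  with aW show "\<forall>i\<in>W <+> Z. a i = 0" by auto
qed

lemma card_add_nullity_le:
  fixes N :: "'v \<Rightarrow> 'v \<Rightarrow> 'f::field" and \<kappa> :: "'z \<Rightarrow> 'v \<Rightarrow> 'f"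
  assumes "finite V" "W \<subseteq> V" "finite Z" "lin_indep W W (\<lambda>u v. N v u)"
    and "\<forall>z\<in>Z. \<forall>v\<in>V. (\<Sum>u\<in>V. N v u * \<kappa> z u) = 0" "lin_indep V Z \<kappa>"
  shows "card W + card Z \<le> card V"
proof -
  have "finite W" using assms(1,2) finite_subset by blast
  then have "card (W <+> Z) \<le> card V"
    using card_le_card_if_lin_indep[OF assms(1) _ lin_indep_unit_vectors_kernel[OF assms]] assms(3) by simp
  then show ?thesis using \<open>finite W\<close> assms(3) by (simp add: card_Plus)
qed

lemma involutory_kernel_eq_0:
  fixes K :: "'v \<Rightarrow> 'v \<Rightarrow> 'f::field"
  assumes fin: "finite V" and K: "involutory V K" and c: "\<forall>y\<in>V. (\<Sum>z\<in>V. K y z * c z) = 0"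
    and x: "x \<in> V"
  shows "c x = 0"
proof -
  have "0 = (\<Sum>y\<in>V. K x y * (\<Sum>z\<in>V. K y z * c z))" using c by simp
  also have "\<dots> = (\<Sum>y\<in>V. \<Sum>z\<in>V. K x y * (K y z * c z))" by (simp add: sum_distrib_left)
  also have "\<dots> = (\<Sum>z\<in>V. \<Sum>y\<in>V. K x y * (K y z * c z))" by (rule sum.swap)
  also have "\<dots> = (\<Sum>z\<in>V. (\<Sum>y\<in>V. K x y * K y z) * c z)"
    by (simp add: sum_distrib_right mult.assoc)
  also have "\<dots> = c x"
    using K x fin unfolding involutory_def by (simp add: if_distrib[of "\<lambda>t. t * _"] sum.delta cong: if_cong)
  finally show ?thesis by simp
qed

lemma lin_indep_insert_pendant_pair:
  fixes N :: "'v \<Rightarrow> 'v \<Rightarrow> 'f::field"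
  assumes fin: "finite W" and new: "w \<notin> insert u W" "u \<notin> W"
    and IH: "lin_indep W W (\<lambda>x y. N y x)"
    and row_w: "\<forall>x\<in>insert w W. N w x = 0" and col_w: "\<forall>x\<in>W. N x w = 0"
    and wu: "N w u \<noteq> 0" "N u w \<noteq> 0"
  shows "lin_indep (insert w (insert u W)) (insert w (insert u W)) (\<lambda>x y. N y x)"
  unfolding lin_indep_def
proof (intro allI impI)
  fix a assume a: "\<forall>r\<in>insert w (insert u W). (\<Sum>x\<in>insert w (insert u W). a x * N r x) = 0"
  have split: "(\<Sum>x\<in>insert w (insert u W). a x * N r x) = a w * N r w + a u * N r u + (\<Sum>x\<in>W. a x * N r x)" for r
    using fin new by (simp add: add.assoc)
  have "a u * N w u = 0" using a split[of w] row_w by simp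
  then have au: "a u = 0" using wu(1) by simp
  have "(\<Sum>x\<in>W. a x * N r x) = 0" if "r \<in> W" for r
    using a split[of r] col_w au that by simp
  then have aW: "\<forall>x\<in>W. a x = 0" using IH unfolding lin_indep_def by blast
  then have "a w * N u w = 0" using a split[of u] au by simp
  then have "a w = 0" using wu(2) by simp
  then show "\<forall>x\<in>insert w (insert u W). a x = 0" using au aW by simp
qed

section \<open>Perfect matchings and forcing sets\<close>

definition induced_subgraph :: "'a graph \<Rightarrow> 'a set \<Rightarrow> 'a graph" where
  "induced_subgraph H W = (W, {e \<in> edges H. e \<subseteq> W})"

lemma verts_induced_subgraph [simp]: "verts (induced_subgraph H W) = W"
  and edges_induced_subgraph [simp]: "edges (induced_subgraph H W) = {e \<in> edges H. e \<subseteq> W}"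
  unfolding induced_subgraph_def verts_def edges_def by simp_all

definition bicoloring :: "'a graph \<Rightarrow> ('a \<Rightarrow> bool) \<Rightarrow> bool" where
  "bicoloring H c \<longleftrightarrow> (\<forall>u v. {u, v} \<in> edges H \<longrightarrow> c u \<noteq> c v)"

lemma simple_graph_finite: "simple_graph H \<Longrightarrow> finite (verts H)"
  unfolding simple_graph_def by simp

lemma simple_graph_edgeE:
  assumes "simple_graph H" "e \<in> edges H"
  obtains u v where "e = {u, v}" "u \<noteq> v" "u \<in> verts H" "v \<in> verts H"
proof -
  have "card e = 2" "e \<subseteq> verts H" using assms unfolding simple_graph_def by auto
  then show ?thesis using that by (auto simp: card_2_iff)
qed

lemma simple_graph_no_loop: "simple_graph H \<Longrightarrow> {v} \<notin> edges H"
  by (metis doubleton_eq_iff insert_absorb2 simple_graph_edgeE)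

lemma simple_graph_induced_subgraph:
  "simple_graph H \<Longrightarrow> W \<subseteq> verts H \<Longrightarrow> simple_graph (induced_subgraph H W)"
  unfolding simple_graph_def by (auto intro: finite_subset)

lemma bicoloring_induced_subgraph: "bicoloring H c \<Longrightarrow> bicoloring (induced_subgraph H W) c"
  unfolding bicoloring_def by simp

lemma perfect_matching_coverE:
  assumes "perfect_matching H M" "v \<in> verts H"
  obtains e where "e \<in> M" "v \<in> e" "\<And>e'. e' \<in> M \<Longrightarrow> v \<in> e' \<Longrightarrow> e' = e"
proof -
  obtain e where "e \<in> M" "v \<in> e" "\<forall>e'. e' \<in> M \<and> v \<in> e' \<longrightarrow> e' = e"
    using assms unfolding perfect_matching_def Ex1_def by blast
  then show thesis using that by blast
qed

lemma ex1_edgeI: "e \<in> A \<Longrightarrow> v \<in> e \<Longrightarrow> (\<And>e'. e' \<in> A \<Longrightarrow> v \<in> e' \<Longrightarrow> e' = e) \<Longrightarrow> \<exists>!e. e \<in> A \<and> v \<in> e"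
  by blast

lemma perfect_matching_edge_unique:
  assumes "simple_graph H" "perfect_matching H M" "e \<in> M" "e' \<in> M" "v \<in> e" "v \<in> e'"
  shows "e = e'"
proof -
  have "v \<in> verts H" using assms simple_graph_edgeE[of H e] unfolding perfect_matching_def by blast
  then show ?thesis using assms unfolding perfect_matching_def by blast
qed

lemma perfect_matching_subset_eq:
  assumes sg: "simple_graph H" and pm: "perfect_matching H M" "perfect_matching H M'"
    and sub: "M \<subseteq> M'"
  shows "M' = M"
proof
  show "M' \<subseteq> M"
  proof
    fix e' assume e': "e' \<in> M'"
    then obtain v w where "e' = {v, w}" "v \<in> verts H"
      using pm(2) sg simple_graph_edgeE unfolding perfect_matching_def by (metis subsetD)
    then obtain e where "e \<in> M" "v \<in> e" using pm(1) unfolding perfect_matching_def by blast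
    moreover have "e = e'"
      using perfect_matching_edge_unique[OF sg pm(2)] \<open>e \<in> M\<close> \<open>v \<in> e\<close> \<open>e' = {v, w}\<close> e' sub by blast
    ultimately show "e' \<in> M" by simp
  qed
qed (rule sub)

definition mate :: "'a set set \<Rightarrow> 'a \<Rightarrow> 'a" where
  "mate M v = (THE u. {v, u} \<in> M)"

lemma mate_eqI:
  assumes "simple_graph H" "perfect_matching H M" "{v, u} \<in> M"
  shows "mate M v = u"
  unfolding mate_def
proof (rule the_equality)
  fix u' assume "{v, u'} \<in> M"
  then have "{v, u'} = {v, u}" using perfect_matching_edge_unique[OF assms(1,2)] assms(3) by blast
  then show "u' = u" by (auto simp: doubleton_eq_iff)
qed (rule assms(3))

lemma
  assumes sg: "simple_graph H" and pm: "perfect_matching H M" and v: "v \<in> verts H"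
  shows mate_edge: "{v, mate M v} \<in> M"
    and mate_in_verts: "mate M v \<in> verts H"
    and mate_neq: "mate M v \<noteq> v"
    and mate_mate: "mate M (mate M v) = v"
proof -
  obtain e where e: "e \<in> M" "v \<in> e" using pm v unfolding perfect_matching_def by blast
  then have "e \<in> edges H" using pm unfolding perfect_matching_def by blast
  then obtain u where u: "e = {v, u}" "u \<noteq> v" "u \<in> verts H"
    using e(2) sg simple_graph_edgeE by (metis insert_commute insert_iff singletonD)
  have m: "mate M v = u" using mate_eqI[OF sg pm] e u by simp
  show "{v, mate M v} \<in> M" "mate M v \<in> verts H" "mate M v \<noteq> v" using m e u by auto
  show "mate M (mate M v) = v" using mate_eqI[OF sg pm, of u v] e u m by (simp add: insert_commute)
qed

lemma perfect_matching_Diff: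
  assumes sg: "simple_graph H" and pm: "perfect_matching H M" and SM: "S \<subseteq> M"
  shows "perfect_matching (induced_subgraph H (verts H - \<Union>S)) (M - S)"
  unfolding perfect_matching_def
proof (intro conjI ballI)
  have "e \<subseteq> verts H - \<Union>S" if "e \<in> M - S" for e
  proof -
    have "e \<inter> e' = {}" if "e' \<in> S" for e'
      using perfect_matching_edge_unique[OF sg pm] \<open>e \<in> M - S\<close> \<open>e' \<in> S\<close> SM by blast
    moreover have "e \<subseteq> verts H"
      using \<open>e \<in> M - S\<close> pm sg unfolding perfect_matching_def simple_graph_def by blast
    ultimately show ?thesis by blast
  qed
  then show "M - S \<subseteq> edges (induced_subgraph H (verts H - \<Union>S))"
    using pm unfolding perfect_matching_def by auto
next
  fix v assume v: "v \<in> verts (induced_subgraph H (verts H - \<Union>S))"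
  then have vH: "v \<in> verts H" by simp
  obtain e where e: "e \<in> M" "v \<in> e" "\<And>e'. e' \<in> M \<Longrightarrow> v \<in> e' \<Longrightarrow> e' = e"
    by (rule perfect_matching_coverE[OF pm vH]) blast
  have "e \<notin> S" using e(2) v by auto
  then show "\<exists>!e. e \<in> M - S \<and> v \<in> e" using e by (intro ex1_edgeI) blast+
qed

lemma perfect_matching_Diff_unique:
  assumes sg: "simple_graph H" and pm: "perfect_matching H M" and fs: "forcing_set H M S"
    and pm': "perfect_matching (induced_subgraph H (verts H - \<Union>S)) M'"
  shows "M' = M - S"
proof -
  have SM: "S \<subseteq> M" using fs unfolding forcing_set_def by blast
  have M'_edges: "e \<in> edges H" "e \<subseteq> verts H - \<Union>S" if "e \<in> M'" for e
    using pm' that unfolding perfect_matching_def by auto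
  have "perfect_matching H (M' \<union> S)"
    unfolding perfect_matching_def
  proof (intro conjI ballI)
    show "M' \<union> S \<subseteq> edges H" using M'_edges SM pm unfolding perfect_matching_def by blast
  next
    fix v assume v: "v \<in> verts H"
    show "\<exists>!e. e \<in> M' \<union> S \<and> v \<in> e"
    proof (cases "v \<in> \<Union>S")
      case True
      then obtain e where e: "e \<in> S" "v \<in> e" by blast
      have "e' = e" if "e' \<in> M' \<union> S" "v \<in> e'" for e'
        using that e True M'_edges(2) perfect_matching_edge_unique[OF sg pm] SM by blast
      then show ?thesis using e by (intro ex1_edgeI) blast+
    next
      case False
      then have "v \<in> verts (induced_subgraph H (verts H - \<Union>S))" using v by simp
      then obtain e where e: "e \<in> M'" "v \<in> e" "\<And>e'. e' \<in> M' \<Longrightarrow> v \<in> e' \<Longrightarrow> e' = e"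
        by (rule perfect_matching_coverE[OF pm']) blast
      then show ?thesis using False by (intro ex1_edgeI) blast+
    qed
  qed
  then have "M' \<union> S = M" using fs unfolding forcing_set_def by blast
  moreover have "M' \<inter> S = {}"
  proof -
    have "e \<noteq> {}" if "e \<in> M'" for e
      using that M'_edges(1) sg simple_graph_edgeE by blast
    then show ?thesis using M'_edges(2) by blast
  qed
  ultimately show ?thesis by blast
qed

lemma unique_perfect_matching_remove_edge:
  assumes sg: "simple_graph H" and pm: "perfect_matching H M"
    and uniq: "\<forall>M'. perfect_matching H M' \<longrightarrow> M' = M" and e: "e \<in> M"
  shows "perfect_matching (induced_subgraph H (verts H - e)) (M - {e})"
    and "\<forall>M'. perfect_matching (induced_subgraph H (verts H - e)) M' \<longrightarrow> M' = M - {e}"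
proof -
  have fs: "forcing_set H M {e}" using uniq e unfolding forcing_set_def by blast
  have "verts H - e = verts H - \<Union>{e}" by simp
  then show "perfect_matching (induced_subgraph H (verts H - e)) (M - {e})"
    "\<forall>M'. perfect_matching (induced_subgraph H (verts H - e)) M' \<longrightarrow> M' = M - {e}"
    using perfect_matching_Diff[OF sg pm] perfect_matching_Diff_unique[OF sg pm fs] e
    by (metis empty_subsetI insert_subset)+
qed

lemma perfect_matching_exchange:
  assumes sg: "simple_graph H" and pm: "perfect_matching H M" and RM: "R \<subseteq> M"
    and pmR: "perfect_matching (induced_subgraph H (\<Union>R)) N"
  shows "perfect_matching H (M - R \<union> N)"
  unfolding perfect_matching_def
proof (intro conjI ballI)
  show "M - R \<union> N \<subseteq> edges H" using pm pmR unfolding perfect_matching_def by auto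
next
  fix v assume v: "v \<in> verts H"
  have N_in: "e \<subseteq> \<Union>R" if "e \<in> N" for e using pmR that unfolding perfect_matching_def by auto
  show "\<exists>!e. e \<in> M - R \<union> N \<and> v \<in> e"
  proof (cases "v \<in> \<Union>R")
    case True
    then have "v \<in> verts (induced_subgraph H (\<Union>R))" by simp
    then obtain e where e: "e \<in> N" "v \<in> e" "\<And>e'. e' \<in> N \<Longrightarrow> v \<in> e' \<Longrightarrow> e' = e"
      by (rule perfect_matching_coverE[OF pmR]) blast
    have "e' \<notin> M - R" if "v \<in> e'" for e'
      using that True perfect_matching_edge_unique[OF sg pm] RM by blast
    then show ?thesis using e by (intro ex1_edgeI) blast+
  next
    case False
    obtain e where e: "e \<in> M" "v \<in> e" "\<And>e'. e' \<in> M \<Longrightarrow> v \<in> e' \<Longrightarrow> e' = e"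
      by (rule perfect_matching_coverE[OF pm v]) blast
    then show ?thesis using False N_in by (intro ex1_edgeI) blast+
  qed
qed

lemma perfect_matching_of_bij:
  assumes bij: "bij_betw f C D" and disj: "C \<inter> D = {}" and E: "\<forall>x\<in>C. {x, f x} \<in> edges H"
  shows "perfect_matching (induced_subgraph H (C \<union> D)) ((\<lambda>x. {x, f x}) ` C)"
  unfolding perfect_matching_def
proof (intro conjI ballI)
  show "(\<lambda>x. {x, f x}) ` C \<subseteq> edges (induced_subgraph H (C \<union> D))"
    using E bij_betw_apply[OF bij] by auto
next
  fix v assume "v \<in> verts (induced_subgraph H (C \<union> D))"
  then consider "v \<in> C" | x where "x \<in> C" "v = f x"
    using bij unfolding bij_betw_def by auto
  then show "\<exists>!e. e \<in> (\<lambda>x. {x, f x}) ` C \<and> v \<in> e"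
  proof cases
    case 1
    have "v \<noteq> f x" if "x \<in> C" for x using disj bij_betw_apply[OF bij that] 1 by blast
    then show ?thesis using 1 by blast
  next
    case (2 x)
    have "y = x" if "y \<in> C" "v = f y" for y
      using that 2 bij unfolding bij_betw_def inj_on_def by metis
    moreover have "v \<noteq> y" if "y \<in> C" for y using disj bij_betw_apply[OF bij \<open>x \<in> C\<close>] 2 that by blast
    ultimately show ?thesis using 2 by blast
  qed
qed

lemma finite_invariant_subset:
  assumes "finite D" "D \<noteq> {}" "f ` D \<subseteq> D"
  obtains C where "C \<subseteq> D" "C \<noteq> {}" "f ` C = C"
proof -
  define P where "P C \<longleftrightarrow> C \<subseteq> D \<and> C \<noteq> {} \<and> f ` C \<subseteq> C" for C
  have "P D" using assms unfolding P_def by simp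
  then obtain C where C: "P C" and min: "\<And>C'. P C' \<Longrightarrow> card C \<le> card C'"
    using ex_has_least_nat[of P D card] by blast
  have "finite C" using C assms(1) unfolding P_def by (meson finite_subset)
  moreover have "P (f ` C)" using C unfolding P_def by blast
  ultimately have "f ` C = C" using C min unfolding P_def by (meson card_subset_eq card_image_le antisym)
  then show ?thesis using C that unfolding P_def by blast
qed

lemma unique_perfect_matching_no_switch:
  assumes sg: "simple_graph H" and pm: "perfect_matching H M"
    and uniq: "\<forall>M'. perfect_matching H M' \<longrightarrow> M' = M"
    and CV: "C \<subseteq> verts H" and disj: "C \<inter> mate M ` C = {}"
    and y_bij: "bij_betw y C (mate M ` C)" and y_edge: "\<forall>x\<in>C. {x, y x} \<in> edges H"
    and x: "x \<in> C"
  shows "y x = mate M x"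
proof -
  define R where "R = (\<lambda>x. {x, mate M x}) ` C"
  have RM: "R \<subseteq> M" unfolding R_def using mate_edge[OF sg pm] CV by auto
  have "\<Union>R = C \<union> mate M ` C" unfolding R_def by auto
  then have "perfect_matching (induced_subgraph H (\<Union>R)) ((\<lambda>x. {x, y x}) ` C)"
    using perfect_matching_of_bij[OF y_bij disj y_edge] by simp
  then have "perfect_matching H (M - R \<union> (\<lambda>x. {x, y x}) ` C)"
    by (rule perfect_matching_exchange[OF sg pm RM])
  then have "{x, y x} \<in> M" using uniq x by blast
  then show ?thesis by (rule sym[OF mate_eqI[OF sg pm]])
qed

text \<open>If every vertex had a neighbor other than its mate, then following
  ``neighbor, then mate'' inside one color class would close up into alternating cycles,
  and switching the matching along them would give a second perfect matching.\<close>
lemma unique_perfect_matching_pendant: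
  assumes sg: "simple_graph H" and col: "bicoloring H c"
    and pm: "perfect_matching H M" and uniq: "\<forall>M'. perfect_matching H M' \<longrightarrow> M' = M"
    and w0: "w0 \<in> verts H"
  obtains w where "w \<in> verts H" "\<forall>u. {w, u} \<in> edges H \<longrightarrow> u = mate M w"
proof (rule ccontr)
  assume "\<not> thesis"
  then have "\<forall>w\<in>verts H. \<exists>u. {w, u} \<in> edges H \<and> u \<noteq> mate M w" using that by blast
  then obtain y where y_edge: "\<And>w. w \<in> verts H \<Longrightarrow> {w, y w} \<in> edges H"
    and y_mate: "\<And>w. w \<in> verts H \<Longrightarrow> y w \<noteq> mate M w"
    by metis
  have y_verts: "y w \<in> verts H" if "w \<in> verts H" for w
    using y_edge[OF that] sg simple_graph_edgeE by (metis doubleton_eq_iff)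
  have y_col: "c (y w) \<noteq> c w" if "w \<in> verts H" for w
    using col y_edge[OF that] unfolding bicoloring_def by metis
  have mate_col: "c (mate M w) \<noteq> c w" if "w \<in> verts H" for w
    using col mate_edge[OF sg pm that] pm unfolding bicoloring_def perfect_matching_def by blast
  have mate_inj: "inj_on (mate M) (verts H)"
    by (metis inj_onI mate_mate[OF sg pm])
  define f where "f w = mate M (y w)" for w
  define D where "D = {w \<in> verts H. c w = c w0}"
  have "f ` D \<subseteq> D"
    unfolding D_def f_def using y_verts y_col mate_col mate_in_verts[OF sg pm] by auto
  moreover have "finite D" "D \<noteq> {}" using simple_graph_finite[OF sg] w0 unfolding D_def by auto
  ultimately obtain C where C: "C \<subseteq> D" "C \<noteq> {}" "f ` C = C"
    using finite_invariant_subset by metis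
  have CV: "C \<subseteq> verts H" using C(1) D_def by blast
  have "finite C" using \<open>finite D\<close> C(1) finite_subset by blast
  then have "bij_betw f C C" using C(3) by (simp add: bij_betw_def eq_card_imp_inj_on)
  moreover have "bij_betw (mate M) C (mate M ` C)" using inj_on_subset[OF mate_inj CV] by (simp add: bij_betw_def)
  ultimately have "bij_betw (mate M \<circ> f) C (mate M ` C)" by (rule bij_betw_trans)
  moreover have "(mate M \<circ> f) x = y x" if "x \<in> C" for x
    using mate_mate[OF sg pm y_verts] CV that unfolding f_def by auto
  ultimately have y_bij: "bij_betw y C (mate M ` C)" using bij_betw_cong[of C "mate M \<circ> f" y] by blast
  have disj: "C \<inter> mate M ` C = {}" using mate_col C(1) unfolding D_def by auto
  obtain x where "x \<in> C" using C(2) by blast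
  then have "y x = mate M x"
    using unique_perfect_matching_no_switch[OF sg pm uniq CV disj y_bij] y_edge CV by blast
  then show False using y_mate \<open>x \<in> C\<close> CV by (metis subsetD)
qed

text \<open>A pendant matched edge \<open>{w, u}\<close> splits off a triangular block; induct on the rest.\<close>
lemma unique_perfect_matching_nonsingular:
  fixes N :: "'a \<Rightarrow> 'a \<Rightarrow> 'f::field"
  assumes "simple_graph H" "bicoloring H c" "perfect_matching H M"
    and "\<forall>M'. perfect_matching H M' \<longrightarrow> M' = M"
    and "\<forall>u\<in>verts H. \<forall>v\<in>verts H. N u v \<noteq> 0 \<longleftrightarrow> {u, v} \<in> edges H"
  shows "lin_indep (verts H) (verts H) (\<lambda>u v. N v u)"
  using assms
proof (induction "card (verts H)" arbitrary: H M rule: less_induct)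
  case less
  note sg = less.prems(1) and col = less.prems(2) and pm = less.prems(3)
    and uniq = less.prems(4) and Nadj = less.prems(5)
  show ?case
  proof (cases "verts H = {}")
    case True
    then show ?thesis by (simp add: lin_indep_def)
  next
    case False
    then obtain w where w: "w \<in> verts H" and pendant: "\<forall>x. {w, x} \<in> edges H \<longrightarrow> x = mate M w"
      using unique_perfect_matching_pendant[OF sg col pm uniq] by blast
    define u where "u = mate M w"
    define W where "W = verts H - {w, u}"
    have u: "u \<in> verts H" "u \<noteq> w" "{w, u} \<in> edges H"
      using mate_in_verts[OF sg pm w] mate_neq[OF sg pm w] mate_edge[OF sg pm w] pm
      unfolding u_def perfect_matching_def by auto
    note remove = unique_perfect_matching_remove_edge[OF sg pm uniq mate_edge[OF sg pm w], folded u_def, folded W_def]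
    have "card W < card (verts H)"
      unfolding W_def using w simple_graph_finite[OF sg] by (intro psubset_card_mono) auto
    moreover have "simple_graph (induced_subgraph H W)"
      using simple_graph_induced_subgraph[OF sg] W_def by blast
    moreover have "\<forall>x\<in>W. \<forall>y\<in>W. N x y \<noteq> 0 \<longleftrightarrow> {x, y} \<in> edges (induced_subgraph H W)"
      using Nadj W_def by auto
    ultimately have IH: "lin_indep W W (\<lambda>u v. N v u)"
      using less.hyps[OF _ _ bicoloring_induced_subgraph[OF col] remove] by simp
    have V_eq: "verts H = insert w (insert u W)" "w \<notin> insert u W" "u \<notin> W"
      unfolding W_def using w u by auto
    have Nw: "N w x = 0" "N x w = 0" if "x \<in> verts H" "x \<noteq> u" for x
      using Nadj pendant w that unfolding u_def by (metis insert_commute)+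
    have "\<forall>x\<in>insert w W. N w x = 0" "\<forall>x\<in>W. N x w = 0" using Nw V_eq by auto
    moreover have "N w u \<noteq> 0" "N u w \<noteq> 0" using Nadj w u by (auto simp: insert_commute)
    moreover have "finite W" using simple_graph_finite[OF sg] W_def by simp
    ultimately show ?thesis
      unfolding V_eq(1) using lin_indep_insert_pendant_pair[OF _ V_eq(2,3) IH] by blast
  qed
qed

theorem forcing_set_card_ge_nullity:
  fixes N :: "'a \<Rightarrow> 'a \<Rightarrow> 'f::field" and \<kappa> :: "'z \<Rightarrow> 'a \<Rightarrow> 'f"
  assumes sg: "simple_graph H" and col: "bicoloring H c" and N: "weighted_adj H N"
    and finZ: "finite Z" and kernel: "\<forall>z\<in>Z. \<forall>v\<in>verts H. (\<Sum>u\<in>verts H. N v u * \<kappa> z u) = 0"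
    and indep: "lin_indep (verts H) Z \<kappa>"
    and pm: "perfect_matching H M" and fs: "forcing_set H M S"
  shows "card Z \<le> 2 * card S"
proof -
  define W where "W = verts H - \<Union>S"
  have SE: "S \<subseteq> edges H" using fs pm unfolding forcing_set_def perfect_matching_def by blast
  have card2: "card e = 2" if "e \<in> S" for e using SE sg that unfolding simple_graph_def by blast
  have "pairwise disjnt S"
    using perfect_matching_edge_unique[OF sg pm] fs unfolding pairwise_def disjnt_def forcing_set_def by blast
  moreover have "finite e" if "e \<in> S" for e using card2[OF that] by (intro card_ge_0_finite) simp
  ultimately have "card (\<Union>S) = sum card S" by (rule card_Union_disjoint)
  also have "\<dots> = 2 * card S" using card2 by simp
  finally have card_U: "card (\<Union>S) = 2 * card S" .
  have UV: "\<Union>S \<subseteq> verts H" using SE sg unfolding simple_graph_def by blast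
  let ?H' = "induced_subgraph H W"
  have "simple_graph ?H'" using simple_graph_induced_subgraph[OF sg] W_def by blast
  moreover have "perfect_matching ?H' (M - S)"
    using perfect_matching_Diff[OF sg pm] fs unfolding forcing_set_def W_def by blast
  moreover have "\<forall>M'. perfect_matching ?H' M' \<longrightarrow> M' = M - S"
    using perfect_matching_Diff_unique[OF sg pm fs] unfolding W_def by blast
  moreover have "\<forall>u\<in>verts ?H'. \<forall>v\<in>verts ?H'. N u v \<noteq> 0 \<longleftrightarrow> {u, v} \<in> edges ?H'"
    using N unfolding weighted_adj_def adjacent_def W_def by auto
  ultimately have "lin_indep (verts ?H') (verts ?H') (\<lambda>u v. N v u)"
    by (rule unique_perfect_matching_nonsingular[OF _ bicoloring_induced_subgraph[OF col]])
  then have "card W + card Z \<le> card (verts H)"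
    by (intro card_add_nullity_le[OF simple_graph_finite[OF sg] _ finZ _ kernel indep]) (auto simp: W_def)
  moreover have "card W = card (verts H) - 2 * card S"
    unfolding W_def using card_U UV simple_graph_finite[OF sg] by (simp add: card_Diff_subset finite_subset)
  moreover have "2 * card S \<le> card (verts H)"
    using card_U UV simple_graph_finite[OF sg] card_mono by metis
  ultimately show ?thesis by linarith
qed

lemma forcing_number_le:
  assumes "perfect_matching H M" "forcing_set H M S"
  shows "forcing_number H \<le> card S"
proof -
  have "forcing_number_of H M \<le> card S"
    unfolding forcing_number_of_def using assms(2) by (intro Least_le) blast
  moreover have "forcing_number H \<le> forcing_number_of H M"
    unfolding forcing_number_def using assms(1) by (intro Least_le) blast
  ultimately show ?thesis by simp
qed

lemma forcing_number_attained:
  assumes sg: "simple_graph H" and pm0: "perfect_matching H M0"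
  obtains M S where "perfect_matching H M" "forcing_set H M S" "card S = forcing_number H"
proof -
  have "\<exists>M. perfect_matching H M \<and> forcing_number_of H M = forcing_number H"
    unfolding forcing_number_def by (rule LeastI[of _ "forcing_number_of H M0"]) (use pm0 in blast)
  then obtain M where M: "perfect_matching H M" "forcing_number_of H M = forcing_number H" by blast
  have "forcing_set H M M"
    unfolding forcing_set_def using perfect_matching_subset_eq[OF sg M(1)] by blast
  have "\<exists>S. forcing_set H M S \<and> card S = forcing_number_of H M"
    unfolding forcing_number_of_def by (rule LeastI[of _ "card M"]) (use \<open>forcing_set H M M\<close> in blast)
  then obtain S where "forcing_set H M S" "card S = forcing_number_of H M" by blast
  then show ?thesis using M that by simp
qed

section \<open>Cartesian products, hypercubes, cycles\<close>

lemma simple_graph_doubletonD: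
  assumes "simple_graph H" "{u, v} \<in> edges H"
  shows "u \<noteq> v" "u \<in> verts H" "v \<in> verts H"
  using simple_graph_edgeE[OF assms] by (metis doubleton_eq_iff)+

lemma verts_cart [simp]: "verts (cart G H) = verts G \<times> verts H"
  unfolding cart_def verts_def by simp

lemma cart_edge_iff:
  "{(g, h), (g', h')} \<in> edges (cart G H) \<longleftrightarrow>
     (g = g' \<and> g \<in> verts G \<and> {h, h'} \<in> edges H) \<or> (h = h' \<and> h \<in> verts H \<and> {g, g'} \<in> edges G)"
proof
  assume "{(g, h), (g', h')} \<in> edges (cart G H)"
  then consider (a) g0 h1 h2 where "{(g, h), (g', h')} = {(g0, h1), (g0, h2)}" "g0 \<in> verts G" "{h1, h2} \<in> edges H"
    | (b) g1 g2 h0 where "{(g, h), (g', h')} = {(g1, h0), (g2, h0)}" "h0 \<in> verts H" "{g1, g2} \<in> edges G"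
    unfolding cart_def edges_def verts_def by auto
  then show "(g = g' \<and> g \<in> verts G \<and> {h, h'} \<in> edges H) \<or> (h = h' \<and> h \<in> verts H \<and> {g, g'} \<in> edges G)"
    by cases (auto simp: doubleton_eq_iff insert_commute)
next
  assume "(g = g' \<and> g \<in> verts G \<and> {h, h'} \<in> edges H) \<or> (h = h' \<and> h \<in> verts H \<and> {g, g'} \<in> edges G)"
  then show "{(g, h), (g', h')} \<in> edges (cart G H)"
    unfolding cart_def edges_def verts_def by auto
qed

lemma cart_edgeE:
  assumes "e \<in> edges (cart G H)"
  obtains g h g' h' where "e = {(g, h), (g', h')}"
  using assms unfolding cart_def edges_def by auto

lemma simple_graph_cart:
  assumes G: "simple_graph G" and H: "simple_graph H"
  shows "simple_graph (cart G H)"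
proof -
  have "e \<subseteq> verts (cart G H) \<and> card e = 2" if e: "e \<in> edges (cart G H)" for e
  proof -
    obtain g h g' h' where e_eq: "e = {(g, h), (g', h')}" using cart_edgeE[OF e] by metis
    then have "(g = g' \<and> g \<in> verts G \<and> {h, h'} \<in> edges H) \<or> (h = h' \<and> h \<in> verts H \<and> {g, g'} \<in> edges G)"
      using e cart_edge_iff by metis
    then show ?thesis
      using simple_graph_doubletonD[OF G, of g g'] simple_graph_doubletonD[OF H, of h h'] e_eq by auto
  qed
  then show ?thesis
    unfolding simple_graph_def using simple_graph_finite[OF G] simple_graph_finite[OF H] by simp
qed

lemma bicoloring_cart:
  assumes G: "bicoloring G c" and H: "bicoloring H c'"
  shows "bicoloring (cart G H) (\<lambda>(g, h). c g \<noteq> c' h)"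
  unfolding bicoloring_def
proof (intro allI impI)
  fix u v assume uv: "{u, v} \<in> edges (cart G H)"
  obtain g h g' h' where u: "u = (g, h)" and v: "v = (g', h')" by fastforce
  have "(g = g' \<and> c' h \<noteq> c' h') \<or> (h = h' \<and> c g \<noteq> c g')"
    using uv G H unfolding u v cart_edge_iff bicoloring_def by blast
  then show "(case u of (g, h) \<Rightarrow> c g \<noteq> c' h) \<noteq> (case v of (g, h) \<Rightarrow> c g \<noteq> c' h)"
    unfolding u v by auto
qed

definition K2 :: "bool graph" where
  "K2 = (UNIV, {{False, True}})"

lemma verts_K2 [simp]: "verts K2 = UNIV"
  and K2_edge_iff [simp]: "{a, b} \<in> edges K2 \<longleftrightarrow> a \<noteq> b"
  unfolding K2_def verts_def edges_def by (auto simp: doubleton_eq_iff)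

lemma simple_graph_K2: "simple_graph K2"
  unfolding simple_graph_def K2_def verts_def edges_def by simp

lemma bicoloring_K2: "bicoloring K2 (\<lambda>b. b)"
  unfolding bicoloring_def by simp

fun differ_in_one :: "bool list \<Rightarrow> bool list \<Rightarrow> bool" where
  "differ_in_one (a # xs) (b # ys) = (if a = b then differ_in_one xs ys else xs = ys)"
| "differ_in_one _ _ = False"

lemma differ_in_one_commute: "differ_in_one xs ys = differ_in_one ys xs"
  by (induction xs ys rule: differ_in_one.induct) auto

lemma differ_positions_Cons:
  "{i. i < Suc (length xs) \<and> (a # xs) ! i \<noteq> (b # ys) ! i} =
     (if a \<noteq> b then {0} else {}) \<union> Suc ` {i. i < length xs \<and> xs ! i \<noteq> ys ! i}"
proof (rule set_eqI)
  fix i show "i \<in> {i. i < Suc (length xs) \<and> (a # xs) ! i \<noteq> (b # ys) ! i} \<longleftrightarrow>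
     i \<in> (if a \<noteq> b then {0} else {}) \<union> Suc ` {i. i < length xs \<and> xs ! i \<noteq> ys ! i}"
    by (cases i) auto
qed

lemma card_differ_positions_eq_1:
  "length xs = length ys \<Longrightarrow> card {i. i < length xs \<and> xs ! i \<noteq> ys ! i} = 1 \<longleftrightarrow> differ_in_one xs ys"
proof (induction xs ys rule: differ_in_one.induct)
  case (1 a xs b ys)
  have len: "length xs = length ys" using "1.prems" by simp
  have "card {i. i < length (a # xs) \<and> (a # xs) ! i \<noteq> (b # ys) ! i} =
      (if a \<noteq> b then 1 else 0) + card {i. i < length xs \<and> xs ! i \<noteq> ys ! i}"
    using differ_positions_Cons[of xs a b ys] by (simp add: card_image)
  moreover have "card {i. i < length xs \<and> xs ! i \<noteq> ys ! i} = 0 \<longleftrightarrow> xs = ys"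
    using len by (auto simp: nth_equalityI)
  ultimately show ?case using "1.IH"[OF _ len] by auto
qed auto

lemma verts_hypercube [simp]: "verts (hypercube d) = {xs. length xs = d}"
  unfolding hypercube_def verts_def by simp

lemma hypercube_edge_iff:
  "{xs, ys} \<in> edges (hypercube d) \<longleftrightarrow> length xs = d \<and> length ys = d \<and> differ_in_one xs ys"
proof
  assume "{xs, ys} \<in> edges (hypercube d)"
  then obtain xs' ys' where "{xs, ys} = {xs', ys'}" "length xs' = d" "length ys' = d"
     "card {i. i < d \<and> xs' ! i \<noteq> ys' ! i} = 1"
    unfolding hypercube_def edges_def by auto
  then show "length xs = d \<and> length ys = d \<and> differ_in_one xs ys"
    using card_differ_positions_eq_1[of xs' ys'] by (auto simp: doubleton_eq_iff differ_in_one_commute)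
next
  assume "length xs = d \<and> length ys = d \<and> differ_in_one xs ys"
  then show "{xs, ys} \<in> edges (hypercube d)"
    using card_differ_positions_eq_1[of xs ys] unfolding hypercube_def edges_def by auto
qed

lemma finite_verts_hypercube: "finite (verts (hypercube d))"
  and card_verts_hypercube: "card (verts (hypercube d)) = 2 ^ d"
  using finite_lists_length_eq[of "UNIV :: bool set" d] card_lists_length_eq[of "UNIV :: bool set" d]
  by simp_all

lemma simple_graph_hypercube: "simple_graph (hypercube d)"
proof -
  have neq: "differ_in_one xs ys \<Longrightarrow> xs \<noteq> ys" for xs ys
    by (induction xs ys rule: differ_in_one.induct) auto
  have "e \<subseteq> verts (hypercube d) \<and> card e = 2" if e: "e \<in> edges (hypercube d)" for e
  proof -
    obtain xs ys where e_eq: "e = {xs, ys}" using e unfolding hypercube_def edges_def by auto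
    then have "length xs = d" "length ys = d" "xs \<noteq> ys" using e neq hypercube_edge_iff by auto
    then show ?thesis using e_eq by simp
  qed
  then show ?thesis unfolding simple_graph_def using finite_verts_hypercube by blast
qed

definition odd_weight :: "bool list \<Rightarrow> bool" where
  "odd_weight xs = odd (length (filter (\<lambda>b. b) xs))"

lemma bicoloring_hypercube: "bicoloring (hypercube d) odd_weight"
proof -
  have "differ_in_one xs ys \<Longrightarrow> odd_weight xs \<noteq> odd_weight ys" for xs ys
    by (induction xs ys rule: differ_in_one.induct) (auto simp: odd_weight_def split: if_splits)
  then show ?thesis unfolding bicoloring_def hypercube_edge_iff by blast
qed

definition cyc_succ :: "nat \<Rightarrow> nat \<Rightarrow> nat" where
  "cyc_succ L p = (if p + 1 = L then 0 else p + 1)"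

definition cyc_pred :: "nat \<Rightarrow> nat \<Rightarrow> nat" where
  "cyc_pred L p = (if p = 0 then L - 1 else p - 1)"

lemma verts_cycle [simp]: "verts (cycle L) = {0..<L}"
  unfolding cycle_def verts_def by simp

lemma Suc_mod_eq_cyc_succ: "p < L \<Longrightarrow> Suc p mod L = cyc_succ L p"
  unfolding cyc_succ_def by auto

lemma cycle_edge_iff:
  assumes "p < L" "q < L"
  shows "{p, q} \<in> edges (cycle L) \<longleftrightarrow> q = cyc_succ L p \<or> q = cyc_pred L p"
proof -
  have "{p, q} \<in> edges (cycle L) \<longleftrightarrow> q = Suc p mod L \<or> p = Suc q mod L"
    unfolding cycle_def edges_def using assms by (auto simp: doubleton_eq_iff)
  also have "\<dots> \<longleftrightarrow> q = cyc_succ L p \<or> q = cyc_pred L p"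
    using assms unfolding Suc_mod_eq_cyc_succ[OF assms(1)] Suc_mod_eq_cyc_succ[OF assms(2)]
    by (auto simp: cyc_succ_def cyc_pred_def)
  finally show ?thesis .
qed

lemma cycle_edgeE:
  assumes "e \<in> edges (cycle L)"
  obtains p where "p < L" "e = {p, cyc_succ L p}"
  using assms Suc_mod_eq_cyc_succ unfolding cycle_def edges_def by auto

lemma simple_graph_cycle:
  assumes "3 \<le> L"
  shows "simple_graph (cycle L)"
proof -
  have "e \<subseteq> verts (cycle L) \<and> card e = 2" if "e \<in> edges (cycle L)" for e
    using that assms by (elim cycle_edgeE) (auto simp: cyc_succ_def)
  then show ?thesis unfolding simple_graph_def by simp
qed

lemma bicoloring_cycle:
  assumes "even L"
  shows "bicoloring (cycle L) odd"
proof -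
  have "odd p \<noteq> odd q" if pq: "{p, q} \<in> edges (cycle L)" for p q
  proof -
    obtain i where "i < L" "{p, q} = {i, cyc_succ L i}" by (rule cycle_edgeE[OF pq])
    then show ?thesis using assms by (auto simp: doubleton_eq_iff cyc_succ_def split: if_splits)
  qed
  then show ?thesis unfolding bicoloring_def by blast
qed

section \<open>Isomorphism invariance\<close>

definition graph_iso :: "('a \<Rightarrow> 'b) \<Rightarrow> 'a graph \<Rightarrow> 'b graph \<Rightarrow> bool" where
  "graph_iso \<phi> G H \<longleftrightarrow> bij_betw \<phi> (verts G) (verts H) \<and> edges H = (`) \<phi> ` edges G"

lemma graph_isoI:
  assumes G: "simple_graph G" and H: "simple_graph H" and bij: "bij_betw \<phi> (verts G) (verts H)"
    and adj: "\<And>u v. u \<in> verts G \<Longrightarrow> v \<in> verts G \<Longrightarrow> {\<phi> u, \<phi> v} \<in> edges H \<longleftrightarrow> {u, v} \<in> edges G"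
  shows "graph_iso \<phi> G H"
  unfolding graph_iso_def
proof (intro conjI bij equalityI subsetI)
  fix e assume "e \<in> edges H"
  then obtain u' v' where e: "e = {u', v'}" "u' \<in> verts H" "v' \<in> verts H" using H simple_graph_edgeE by metis
  then obtain u v where "u \<in> verts G" "v \<in> verts G" "u' = \<phi> u" "v' = \<phi> v"
    using bij unfolding bij_betw_def by blast
  then show "e \<in> (`) \<phi> ` edges G" using adj \<open>e \<in> edges H\<close> e by (intro image_eqI[of _ _ "{u, v}"]) auto
next
  fix e' assume "e' \<in> (`) \<phi> ` edges G"
  then obtain e where "e \<in> edges G" "e' = \<phi> ` e" by blast
  moreover from this obtain u v where "e = {u, v}" "u \<in> verts G" "v \<in> verts G" using G simple_graph_edgeE by metis
  ultimately show "e' \<in> edges H" using adj by simp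
qed

lemma the_inv_into_image_image:
  assumes "inj_on \<phi> A" "e \<subseteq> A"
  shows "the_inv_into A \<phi> ` \<phi> ` e = e"
  using assms by (force simp: the_inv_into_f_f image_image subset_iff)

lemma image_the_inv_into_image:
  assumes "inj_on \<phi> A" "e \<subseteq> \<phi> ` A"
  shows "\<phi> ` the_inv_into A \<phi> ` e = e"
  using assms by (force simp: f_the_inv_into_f image_image subset_iff)

lemma graph_iso_adjacent:
  assumes G: "simple_graph G" and iso: "graph_iso \<phi> G H" and uv: "u \<in> verts G" "v \<in> verts G"
  shows "{\<phi> u, \<phi> v} \<in> edges H \<longleftrightarrow> {u, v} \<in> edges G"
proof
  assume "{\<phi> u, \<phi> v} \<in> edges H"
  then obtain e where e: "e \<in> edges G" "\<phi> ` e = \<phi> ` {u, v}" using iso unfolding graph_iso_def by auto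
  have inj: "inj_on \<phi> (verts G)" using iso unfolding graph_iso_def bij_betw_def by blast
  have "e \<subseteq> verts G" using G e(1) unfolding simple_graph_def by blast
  then have "e = {u, v}" using the_inv_into_image_image[OF inj] e(2) uv by (metis empty_subsetI insert_subset)
  then show "{u, v} \<in> edges G" using e(1) by simp
next
  assume "{u, v} \<in> edges G"
  then have "\<phi> ` {u, v} \<in> (`) \<phi> ` edges G" by (rule imageI)
  then show "{\<phi> u, \<phi> v} \<in> edges H" using iso unfolding graph_iso_def by simp
qed

lemma graph_iso_inv:
  assumes G: "simple_graph G" and iso: "graph_iso \<phi> G H"
  shows "graph_iso (the_inv_into (verts G) \<phi>) H G"
proof -
  have bij: "bij_betw \<phi> (verts G) (verts H)" and E: "edges H = (`) \<phi> ` edges G"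
    using iso unfolding graph_iso_def by auto
  have inv: "the_inv_into (verts G) \<phi> ` \<phi> ` e = e" if "e \<in> edges G" for e
    using the_inv_into_image_image[OF bij_betw_imp_inj_on[OF bij]] G that unfolding simple_graph_def by blast
  have "(`) (the_inv_into (verts G) \<phi>) ` edges H = (\<lambda>e. the_inv_into (verts G) \<phi> ` \<phi> ` e) ` edges G"
    unfolding E by (rule image_image)
  also have "\<dots> = (\<lambda>e. e) ` edges G" by (rule image_cong[OF refl inv])
  finally have "(`) (the_inv_into (verts G) \<phi>) ` edges H = edges G" by simp
  then show ?thesis unfolding graph_iso_def using bij_betw_the_inv_into[OF bij] by simp
qed

lemma invol_adj_graph_iso:
  fixes A :: "'b \<Rightarrow> 'b \<Rightarrow> 'f::field"
  assumes G: "simple_graph G" and iso: "graph_iso \<phi> G H" and A: "A \<in> invol_adj H"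
  shows "(\<lambda>u v. if u \<in> verts G \<and> v \<in> verts G then A (\<phi> u) (\<phi> v) else 0) \<in> invol_adj G"
    (is "?A \<in> _")
proof -
  have bij: "bij_betw \<phi> (verts G) (verts H)" using iso unfolding graph_iso_def by blast
  have "weighted_adj G ?A"
    unfolding weighted_adj_def adjacent_def
  proof (intro conjI allI impI ballI)
    fix u v assume "u \<in> verts G" "v \<in> verts G"
    moreover have "\<phi> u \<in> verts H" "\<phi> v \<in> verts H" using bij_betw_apply[OF bij] calculation by auto
    ultimately show "?A u v \<noteq> 0 \<longleftrightarrow> {u, v} \<in> edges G"
      using A graph_iso_adjacent[OF G iso] unfolding invol_adj_def weighted_adj_def adjacent_def by simp
  qed auto
  moreover have "involutory (verts G) ?A"
    unfolding involutory_def
  proof (intro ballI)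
    fix u v assume uv: "u \<in> verts G" "v \<in> verts G"
    have "(\<Sum>w\<in>verts G. ?A u w * ?A w v) = (\<Sum>w\<in>verts G. A (\<phi> u) (\<phi> w) * A (\<phi> w) (\<phi> v))"
      using uv by simp
    also have "\<dots> = (\<Sum>w'\<in>verts H. A (\<phi> u) w' * A w' (\<phi> v))"
      using sum.reindex_bij_betw[OF bij, of "\<lambda>w'. A (\<phi> u) w' * A w' (\<phi> v)"] by simp
    also have "\<dots> = (if u = v then 1 else 0)"
      using A bij_betw_apply[OF bij] uv bij_betw_imp_inj_on[OF bij]
      unfolding invol_adj_def involutory_def inj_on_def by auto
    finally show "(\<Sum>w\<in>verts G. ?A u w * ?A w v) = (if u = v then 1 else 0)" .
  qed
  ultimately show ?thesis unfolding invol_adj_def by simp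
qed

lemma perfect_matching_graph_iso:
  assumes G: "simple_graph G" and iso: "graph_iso \<phi> G H" and pm: "perfect_matching G M"
  shows "perfect_matching H ((`) \<phi> ` M)"
  unfolding perfect_matching_def
proof (intro conjI ballI)
  show "(`) \<phi> ` M \<subseteq> edges H" using pm iso unfolding perfect_matching_def graph_iso_def by auto
next
  have bij: "bij_betw \<phi> (verts G) (verts H)" using iso unfolding graph_iso_def by blast
  have M_verts: "e \<subseteq> verts G" if "e \<in> M" for e
    using that pm G unfolding perfect_matching_def simple_graph_def by blast
  fix v' assume "v' \<in> verts H"
  then obtain v where v: "v \<in> verts G" "v' = \<phi> v" using bij unfolding bij_betw_def by blast
  obtain e where e: "e \<in> M" "v \<in> e" "\<And>e'. e' \<in> M \<Longrightarrow> v \<in> e' \<Longrightarrow> e' = e"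
    by (rule perfect_matching_coverE[OF pm v(1)]) blast
  have "e' = e" if "e' \<in> M" "\<phi> v \<in> \<phi> ` e'" for e'
  proof -
    have "v \<in> e'" using that M_verts[OF that(1)] v(1) bij_betw_imp_inj_on[OF bij]
      unfolding inj_on_def by blast
    then show ?thesis using e(3) that(1) by blast
  qed
  then show "\<exists>!e'. e' \<in> (`) \<phi> ` M \<and> v' \<in> e'" using e(1,2) v(2) by (intro ex1_edgeI) blast+
qed

lemma forcing_set_graph_iso:
  assumes G: "simple_graph G" and H: "simple_graph H" and iso: "graph_iso \<phi> G H"
    and pm: "perfect_matching G M" and fs: "forcing_set G M S"
  shows "forcing_set H ((`) \<phi> ` M) ((`) \<phi> ` S)"
  unfolding forcing_set_def
proof (intro conjI allI impI)
  show "(`) \<phi> ` S \<subseteq> (`) \<phi> ` M" using fs unfolding forcing_set_def by blast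
next
  fix M' assume M': "perfect_matching H M' \<and> (`) \<phi> ` S \<subseteq> M'"
  define \<psi> where "\<psi> = the_inv_into (verts G) \<phi>"
  have bij: "bij_betw \<phi> (verts G) (verts H)" using iso unfolding graph_iso_def by blast
  then have inj: "inj_on \<phi> (verts G)" by (rule bij_betw_imp_inj_on)
  have G_edges: "e \<subseteq> verts G" if "e \<in> edges G" for e using that G unfolding simple_graph_def by blast
  have H_edges: "e \<subseteq> \<phi> ` verts G" if "e \<in> edges H" for e
    using that H bij unfolding simple_graph_def bij_betw_def by blast
  have "perfect_matching G ((`) \<psi> ` M')"
    using perfect_matching_graph_iso[OF H graph_iso_inv[OF G iso]] M' unfolding \<psi>_def by blast
  moreover have "S \<subseteq> (`) \<psi> ` M'"
  proof
    fix e assume "e \<in> S"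
    then have "\<phi> ` e \<in> M'" "e \<in> edges G" using M' fs pm unfolding forcing_set_def perfect_matching_def by auto
    then show "e \<in> (`) \<psi> ` M'"
      using the_inv_into_image_image[OF inj G_edges] unfolding \<psi>_def by (metis image_eqI)
  qed
  ultimately have "(`) \<psi> ` M' = M" using fs unfolding forcing_set_def by blast
  moreover have "(`) \<phi> ` (`) \<psi> ` M' = M'"
    using image_the_inv_into_image[OF inj H_edges] M' unfolding \<psi>_def perfect_matching_def image_image
    by (simp cong: image_cong add: subset_iff)
  ultimately show "M' = (`) \<phi> ` M" by simp
qed

lemma forcing_number_graph_iso_le:
  assumes G: "simple_graph G" and H: "simple_graph H" and iso: "graph_iso \<phi> G H"
    and pm: "perfect_matching G M0"
  shows "forcing_number H \<le> forcing_number G"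
proof -
  obtain M S where M: "perfect_matching G M" "forcing_set G M S" "card S = forcing_number G"
    using forcing_number_attained[OF G pm] by metis
  have "inj_on ((`) \<phi>) S"
  proof (rule inj_on_subset)
    show "inj_on ((`) \<phi>) (Pow (verts G))"
      using iso unfolding graph_iso_def bij_betw_def by (simp add: inj_on_image_Pow)
    show "S \<subseteq> Pow (verts G)" using M G unfolding forcing_set_def perfect_matching_def simple_graph_def by blast
  qed
  then have "card ((`) \<phi> ` S) = forcing_number G" using M(3) by (simp add: card_image)
  moreover have "forcing_number H \<le> card ((`) \<phi> ` S)"
    using forcing_number_le perfect_matching_graph_iso[OF G iso M(1)] forcing_set_graph_iso[OF G H iso M(1,2)] by blast
  ultimately show ?thesis by simp
qed

lemma forcing_number_graph_iso:
  assumes G: "simple_graph G" and H: "simple_graph H" and iso: "graph_iso \<phi> G H"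
    and pm: "perfect_matching G M"
  shows "forcing_number H = forcing_number G"
  using forcing_number_graph_iso_le[OF G H iso pm]
    forcing_number_graph_iso_le[OF H G graph_iso_inv[OF G iso] perfect_matching_graph_iso[OF G iso pm]]
  by simp

section \<open>The prism \<open>H \<box> K\<^sub>2\<close>\<close>

lemma sum_times_UNIV_bool:
  "(\<Sum>x\<in>V \<times> (UNIV :: bool set). f x) = (\<Sum>v\<in>V. f (v, True)) + (\<Sum>v\<in>V. f (v, False))"
  by (simp add: sum.cartesian_product' UNIV_bool sum.distrib add.commute)

lemma cart_K2_edge_iff:
  "{(u, b), (v, b')} \<in> edges (cart H K2) \<longleftrightarrow> (u = v \<and> u \<in> verts H \<and> b \<noteq> b') \<or> (b = b' \<and> {u, v} \<in> edges H)"
  unfolding cart_edge_iff by auto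

lemma invol_adjD:
  assumes "A \<in> invol_adj H"
  shows "\<And>u v. u \<notin> verts H \<or> v \<notin> verts H \<Longrightarrow> A u v = 0"
    and "\<And>u v. u \<in> verts H \<Longrightarrow> v \<in> verts H \<Longrightarrow> A u v \<noteq> 0 \<longleftrightarrow> {u, v} \<in> edges H"
  using assms unfolding invol_adj_def weighted_adj_def involutory_def adjacent_def by auto

text \<open>The block matrix \<open>[[-a A, (1 - a\<^sup>2) I], [I, a A]]\<close>, the block \<open>True\<close> listed first.\<close>
definition prism_invol_matrix :: "'f \<Rightarrow> 'v set \<Rightarrow> ('v \<Rightarrow> 'v \<Rightarrow> 'f) \<Rightarrow> 'v \<times> bool \<Rightarrow> 'v \<times> bool \<Rightarrow> 'f::field"
  where "prism_invol_matrix a V A = (\<lambda>(u, b) (v, b').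
    if b = b' then (if b then - a else a) * A u v
    else if u = v \<and> u \<in> V then (if b then 1 - a * a else 1) else 0)"

lemma involutory_prism_invol_matrix:
  fixes A :: "'v \<Rightarrow> 'v \<Rightarrow> 'f::field"
  assumes fin: "finite V" and A: "involutory V A"
  shows "involutory (V \<times> UNIV) (prism_invol_matrix a V A)"
  unfolding involutory_def
proof (intro ballI)
  fix x y assume "x \<in> V \<times> (UNIV :: bool set)" "y \<in> V \<times> (UNIV :: bool set)"
  then obtain u b v b' where xy: "x = (u, b)" "y = (v, b')" "u \<in> V" "v \<in> V" by auto
  let ?M = "prism_invol_matrix a V A"
  define s where "s b = (if b then - a else a)" for b
  define t where "t b = (if b then 1 - a * a else 1 :: 'f)" for b
  have same_block: "(\<Sum>w\<in>V. ?M (u, b) (w, b) * ?M (w, b) (v, b')) =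
      (if b = b' then s b * s b * (if u = v then 1 else 0) else s b * t b * A u v)"
  proof (cases "b = b'")
    case True
    have "(\<Sum>w\<in>V. ?M (u, b) (w, b) * ?M (w, b) (v, b')) = s b * s b * (\<Sum>w\<in>V. A u w * A w v)"
      using True unfolding prism_invol_matrix_def s_def by (simp add: sum_distrib_left ac_simps)
    then show ?thesis using True A xy unfolding involutory_def by simp
  next
    case False
    have "(\<Sum>w\<in>V. ?M (u, b) (w, b) * ?M (w, b) (v, b')) = (\<Sum>w\<in>V. if w = v then s b * t b * A u w else 0)"
      using False xy unfolding prism_invol_matrix_def s_def t_def by (intro sum.cong) auto
    then show ?thesis using False fin xy by simp
  qed
  have other_block: "(\<Sum>w\<in>V. ?M (u, b) (w, \<not> b) * ?M (w, \<not> b) (v, b')) = t b * ?M (u, \<not> b) (v, b')"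
  proof -
    have "(\<Sum>w\<in>V. ?M (u, b) (w, \<not> b) * ?M (w, \<not> b) (v, b')) = (\<Sum>w\<in>V. if w = u then t b * ?M (w, \<not> b) (v, b') else 0)"
      using xy unfolding t_def by (intro sum.cong) (auto simp: prism_invol_matrix_def)
    then show ?thesis using fin xy by simp
  qed
  have "(\<Sum>z\<in>V \<times> UNIV. ?M x z * ?M z y) =
      (\<Sum>w\<in>V. ?M (u, b) (w, b) * ?M (w, b) (v, b')) + (\<Sum>w\<in>V. ?M (u, b) (w, \<not> b) * ?M (w, \<not> b) (v, b'))"
    unfolding xy sum_times_UNIV_bool by (cases b) (simp_all add: add.commute)
  also have "\<dots> = (if x = y then 1 else 0)"
    unfolding same_block other_block using xy
    by (cases b; cases b') (auto simp: prism_invol_matrix_def s_def t_def algebra_simps)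
  finally show "(\<Sum>z\<in>V \<times> UNIV. ?M x z * ?M z y) = (if x = y then 1 else 0)" .
qed

theorem invol_adj_prism:
  fixes A :: "'v \<Rightarrow> 'v \<Rightarrow> 'f::field"
  assumes H: "simple_graph H" and A: "A \<in> invol_adj H" and a: "a \<noteq> 0" "a * a \<noteq> 1"
  shows "prism_invol_matrix a (verts H) A \<in> invol_adj (cart H K2)"
proof -
  have "weighted_adj (cart H K2) (prism_invol_matrix a (verts H) A)"
    unfolding weighted_adj_def adjacent_def
  proof (intro conjI allI impI ballI)
    fix x y assume "x \<notin> verts (cart H K2) \<or> y \<notin> verts (cart H K2)"
    then show "prism_invol_matrix a (verts H) A x y = 0"
      using invol_adjD(1)[OF A] by (auto simp: prism_invol_matrix_def split: prod.splits)
  next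
    fix x y assume "x \<in> verts (cart H K2)" "y \<in> verts (cart H K2)"
    then obtain u b v b' where xy: "x = (u, b)" "y = (v, b')" "u \<in> verts H" "v \<in> verts H" by auto
    have "1 - a * a \<noteq> 0" using a(2) by simp
    moreover have "{x, y} \<in> edges (cart H K2) \<longleftrightarrow> (u = v \<and> b \<noteq> b') \<or> (b = b' \<and> {u, v} \<in> edges H)"
      unfolding xy(1,2) cart_K2_edge_iff using xy(3) by blast
    ultimately show "prism_invol_matrix a (verts H) A x y \<noteq> 0 \<longleftrightarrow> {x, y} \<in> edges (cart H K2)"
      using xy a invol_adjD(2)[OF A] by (auto simp: prism_invol_matrix_def)
  qed
  moreover have "involutory (verts (cart H K2)) (prism_invol_matrix a (verts H) A)"
    using involutory_prism_invol_matrix[OF simple_graph_finite[OF H]] A unfolding invol_adj_def by auto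
  ultimately show ?thesis unfolding invol_adj_def by simp
qed

text \<open>The block matrix \<open>[[A, I], [I, A]]\<close>: for involutory \<open>A\<close> its kernel contains
  the \<open>|V|\<close> independent vectors \<open>(- A e\<^sub>z, e\<^sub>z)\<close>.\<close>
definition prism_null_matrix :: "'v set \<Rightarrow> ('v \<Rightarrow> 'v \<Rightarrow> 'f) \<Rightarrow> 'v \<times> bool \<Rightarrow> 'v \<times> bool \<Rightarrow> 'f::field"
  where "prism_null_matrix V A = (\<lambda>(u, b) (v, b'). if b = b' then A u v else if u = v \<and> u \<in> V then 1 else 0)"

definition prism_null_vec :: "('v \<Rightarrow> 'v \<Rightarrow> 'f) \<Rightarrow> 'v \<Rightarrow> 'v \<times> bool \<Rightarrow> 'f::field"
  where "prism_null_vec A z = (\<lambda>(v, b). if b then - A v z else if v = z then 1 else 0)"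

lemma prism_null_matrix_kernel:
  fixes A :: "'v \<Rightarrow> 'v \<Rightarrow> 'f::field"
  assumes fin: "finite V" and A: "involutory V A" and z: "z \<in> V" and x: "x \<in> V \<times> UNIV"
  shows "(\<Sum>y\<in>V \<times> UNIV. prism_null_matrix V A x y * prism_null_vec A z y) = 0"
proof -
  obtain u b where x_eq: "x = (u, b)" and u: "u \<in> V" using x by auto
  have delta: "(\<Sum>w\<in>V. (if u = w then 1 else 0) * f w) = f u" for f :: "'v \<Rightarrow> 'f"
    using fin u by (simp add: if_distrib[of "\<lambda>t. t * _"] sum.delta cong: if_cong)
  show ?thesis
  proof (cases b)
    case True
    have "(\<Sum>w\<in>V. A u w * - A w z) = - (if u = z then 1 else 0)"
      using A u z unfolding involutory_def by (simp add: sum_negf)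
    then show ?thesis using delta[of "\<lambda>w. if w = z then 1 else 0"] u z True
      unfolding x_eq sum_times_UNIV_bool prism_null_matrix_def prism_null_vec_def by simp
  next
    case False
    have "(\<Sum>w\<in>V. A u w * (if w = z then 1 else 0)) = A u z"
      using fin z by (simp add: if_distrib[of "\<lambda>t. _ * t"] sum.delta' cong: if_cong)
    then show ?thesis using delta[of "\<lambda>w. - A w z"] u False
      unfolding x_eq sum_times_UNIV_bool prism_null_matrix_def prism_null_vec_def by simp
  qed
qed

lemma lin_indep_prism_null_vec:
  assumes "finite V"
  shows "lin_indep (V \<times> UNIV) V (prism_null_vec A)"
  unfolding lin_indep_def
proof (intro allI impI ballI)
  fix \<beta> z assume h: "\<forall>x\<in>V \<times> UNIV. (\<Sum>z\<in>V. \<beta> z * prism_null_vec A z x) = 0" and z: "z \<in> V"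
  have "(\<Sum>z'\<in>V. \<beta> z' * prism_null_vec A z' (z, False)) = \<beta> z"
    using assms z by (simp add: prism_null_vec_def if_distrib[of "\<lambda>t. _ * t"] sum.delta cong: if_cong)
  then show "\<beta> z = 0" using h z by simp
qed

theorem prism_forcing_set_card_ge:
  fixes A :: "'v \<Rightarrow> 'v \<Rightarrow> 'f::field"
  assumes H: "simple_graph H" and col: "bicoloring H c" and A: "A \<in> invol_adj H"
    and pm: "perfect_matching (cart H K2) M" and fs: "forcing_set (cart H K2) M S"
  shows "card (verts H) \<le> 2 * card S"
proof (rule forcing_set_card_ge_nullity)
  show "simple_graph (cart H K2)" by (rule simple_graph_cart[OF H simple_graph_K2])
  show "bicoloring (cart H K2) (\<lambda>(v, b). c v \<noteq> b)" by (rule bicoloring_cart[OF col bicoloring_K2])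
  show "weighted_adj (cart H K2) (prism_null_matrix (verts H) A)"
    unfolding weighted_adj_def adjacent_def
  proof (intro conjI allI impI ballI)
    fix x y assume "x \<notin> verts (cart H K2) \<or> y \<notin> verts (cart H K2)"
    then show "prism_null_matrix (verts H) A x y = 0"
      using invol_adjD(1)[OF A] by (auto simp: prism_null_matrix_def split: prod.splits)
  next
    fix x y assume "x \<in> verts (cart H K2)" "y \<in> verts (cart H K2)"
    then obtain u b v b' where xy: "x = (u, b)" "y = (v, b')" "u \<in> verts H" "v \<in> verts H" by auto
    moreover have "{x, y} \<in> edges (cart H K2) \<longleftrightarrow> (u = v \<and> b \<noteq> b') \<or> (b = b' \<and> {u, v} \<in> edges H)"
      unfolding xy(1,2) cart_K2_edge_iff using xy(3) by blast
    ultimately show "prism_null_matrix (verts H) A x y \<noteq> 0 \<longleftrightarrow> {x, y} \<in> edges (cart H K2)"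
      using invol_adjD(2)[OF A] by (auto simp: prism_null_matrix_def)
  qed
  show "\<forall>z\<in>verts H. \<forall>x\<in>verts (cart H K2).
      (\<Sum>y\<in>verts (cart H K2). prism_null_matrix (verts H) A x y * prism_null_vec A z y) = 0"
    using prism_null_matrix_kernel[OF simple_graph_finite[OF H]] A unfolding invol_adj_def by auto
  show "lin_indep (verts (cart H K2)) (verts H) (prism_null_vec A)"
    using lin_indep_prism_null_vec[OF simple_graph_finite[OF H]] by simp
qed (use pm fs simple_graph_finite[OF H] in auto)

definition rungs :: "'v set \<Rightarrow> ('v \<times> bool) set set" where
  "rungs W = (\<lambda>v. {(v, False), (v, True)}) ` W"

lemma card_rungs: "card (rungs W) = card W"
  unfolding rungs_def by (rule card_image) (auto simp: inj_on_def doubleton_eq_iff)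

lemma perfect_matching_rungs: "perfect_matching (cart H K2) (rungs (verts H))"
  unfolding perfect_matching_def rungs_def
proof (intro conjI ballI)
  fix x assume "x \<in> verts (cart H K2)"
  then obtain v b where "x = (v, b)" "v \<in> verts H" by auto
  then show "\<exists>!e. e \<in> (\<lambda>v. {(v, False), (v, True)}) ` verts H \<and> x \<in> e"
    by (intro ex1_edgeI[of "{(v, False), (v, True)}"]) auto
qed (auto simp: cart_K2_edge_iff)

text \<open>Once the rungs at one color class are fixed, every remaining vertex \<open>(v, b)\<close> has
  only its rung partner left: its neighbors \<open>(w, b)\<close> lie in the other color class.\<close>
lemma forcing_set_rungs:
  assumes H: "simple_graph H" and col: "bicoloring H c"
  shows "forcing_set (cart H K2) (rungs (verts H)) (rungs {v \<in> verts H. c v})"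
  unfolding forcing_set_def
proof (intro conjI allI impI)
  show "rungs {v \<in> verts H. c v} \<subseteq> rungs (verts H)" unfolding rungs_def by blast
next
  fix M' assume M': "perfect_matching (cart H K2) M' \<and> rungs {v \<in> verts H. c v} \<subseteq> M'"
  have sg: "simple_graph (cart H K2)" by (rule simple_graph_cart[OF H simple_graph_K2])
  have "M' \<subseteq> rungs (verts H)"
  proof
    fix e assume e: "e \<in> M'"
    then have eE: "e \<in> edges (cart H K2)" using M' unfolding perfect_matching_def by blast
    then obtain u b w b' where e_eq: "e = {(u, b), (w, b')}" by (rule cart_edgeE)
    have fixed: "e \<in> rungs (verts H)" if "x \<in> e" "x = (v, b'')" "v \<in> verts H" "c v" for x v b''
    proof -
      have "{(v, False), (v, True)} \<in> M'" using M' that(3,4) unfolding rungs_def by blast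
      moreover have "x \<in> {(v, False), (v, True)}" using that(2) by (cases b'') auto
      ultimately have "e = {(v, False), (v, True)}"
        using perfect_matching_edge_unique[OF sg] M' e that(1) by blast
      then show ?thesis using that(3) unfolding rungs_def by blast
    qed
    have "(u = w \<and> u \<in> verts H \<and> b \<noteq> b') \<or> (b = b' \<and> {u, w} \<in> edges H)"
      using eE e_eq cart_K2_edge_iff by metis
    then show "e \<in> rungs (verts H)"
    proof
      assume "u = w \<and> u \<in> verts H \<and> b \<noteq> b'"
      then show ?thesis unfolding e_eq rungs_def by (cases b) (auto simp: insert_commute)
    next
      assume edge: "b = b' \<and> {u, w} \<in> edges H"
      then have "c u \<or> c w" using col unfolding bicoloring_def by blast
      moreover have "u \<in> verts H" "w \<in> verts H" using edge simple_graph_doubletonD[OF H] by blast+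
      ultimately show ?thesis using fixed e_eq by blast
    qed
  qed
  then show "M' = rungs (verts H)"
    using perfect_matching_subset_eq[OF sg _ perfect_matching_rungs] M' by blast
qed

theorem forcing_number_prism:
  fixes A :: "'v \<Rightarrow> 'v \<Rightarrow> 'f::field"
  assumes H: "simple_graph H" and col: "bicoloring H c" and A: "A \<in> invol_adj H"
  shows "2 * forcing_number (cart H K2) = card (verts H)"
proof (rule antisym)
  have col': "bicoloring H (\<lambda>v. \<not> c v)" using col unfolding bicoloring_def by blast
  have "forcing_number (cart H K2) \<le> card {v \<in> verts H. c v}"
    "forcing_number (cart H K2) \<le> card {v \<in> verts H. \<not> c v}"
    using forcing_number_le[OF perfect_matching_rungs] forcing_set_rungs[OF H col]
      forcing_set_rungs[OF H col'] card_rungs by metis+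
  moreover have "card (verts H) = card ({v \<in> verts H. c v} \<union> {v \<in> verts H. \<not> c v})"
    by (rule arg_cong[where f = card]) blast
  then have "card (verts H) = card {v \<in> verts H. c v} + card {v \<in> verts H. \<not> c v}"
    using simple_graph_finite[OF H] by (simp add: card_Un_disjoint disjoint_iff)
  ultimately show "2 * forcing_number (cart H K2) \<le> card (verts H)" by linarith
next
  obtain M S where "perfect_matching (cart H K2) M" "forcing_set (cart H K2) M S"
      "card S = forcing_number (cart H K2)"
    using forcing_number_attained[OF simple_graph_cart[OF H simple_graph_K2] perfect_matching_rungs] by metis
  then show "card (verts H) \<le> 2 * forcing_number (cart H K2)"
    using prism_forcing_set_card_ge[OF H col A] by metis
qed

section \<open>Products with even cycles\<close>

lemma cyc_succ_lt: "p < L \<Longrightarrow> cyc_succ L p < L"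
  and cyc_pred_lt: "p < L \<Longrightarrow> cyc_pred L p < L"
  and cyc_succ_pred: "p < L \<Longrightarrow> cyc_succ L (cyc_pred L p) = p"
  and cyc_pred_succ: "p < L \<Longrightarrow> cyc_pred L (cyc_succ L p) = p"
  unfolding cyc_succ_def cyc_pred_def by auto

lemma cyc_succ_pred_distinct:
  assumes "p < L" "3 \<le> L"
  shows "cyc_succ L p \<noteq> p" "cyc_pred L p \<noteq> p" "cyc_succ L p \<noteq> cyc_pred L p"
  using assms unfolding cyc_succ_def cyc_pred_def by auto

lemma even_cyc_succ: "even L \<Longrightarrow> p < L \<Longrightarrow> even (cyc_succ L p) \<longleftrightarrow> odd p"
  and even_cyc_pred: "even L \<Longrightarrow> p < L \<Longrightarrow> even (cyc_pred L p) \<longleftrightarrow> odd p"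
  unfolding cyc_succ_def cyc_pred_def by (auto simp: even_diff_nat)

text \<open>In row \<open>(x, p)\<close> the coefficients of layer \<open>p\<close> (through \<open>K\<close>) and of the neighboring
  layers \<open>p \<pm> 1\<close> are the \<open>2 \<times> 2\<close> minors of the vectors \<open>(1, t q)\<close>, \<open>q \<in> {p, p + 1, p - 1}\<close>.
  Hence both weight sequences \<open>1\<close> and \<open>t\<close> solve the three-term recurrence along the cycle,
  which produces \<open>2 |V|\<close> kernel vectors.\<close>
definition cycle_prod_matrix ::
    "'x set \<Rightarrow> nat \<Rightarrow> (nat \<Rightarrow> 'f) \<Rightarrow> ('x \<Rightarrow> 'x \<Rightarrow> 'f) \<Rightarrow> 'x \<times> nat \<Rightarrow> 'x \<times> nat \<Rightarrow> 'f::field"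
  where "cycle_prod_matrix V L t K = (\<lambda>(x, p) (y, q). if x \<in> V \<and> y \<in> V \<and> p < L \<and> q < L then
     (if q = p then (t (cyc_pred L p) - t (cyc_succ L p)) * K x y
      else if y = x \<and> q = cyc_succ L p then t p - t (cyc_pred L p)
      else if y = x \<and> q = cyc_pred L p then t (cyc_succ L p) - t p
      else 0) else 0)"

definition cycle_prod_null_vec :: "('x \<Rightarrow> 'x \<Rightarrow> 'f) \<Rightarrow> (nat \<Rightarrow> 'f) \<Rightarrow> 'x \<times> bool \<Rightarrow> 'x \<times> nat \<Rightarrow> 'f::field"
  where "cycle_prod_null_vec K t = (\<lambda>(z, j) (y, q).
    (if j then t q else 1) * (if even q then (if y = z then 1 else 0) else K y z))"

definition cycle_square_coloring :: "nat \<Rightarrow> (nat \<Rightarrow> 'f) \<Rightarrow> bool" where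
  "cycle_square_coloring L t \<longleftrightarrow> (\<forall>p<L. t p \<noteq> t (cyc_succ L p) \<and> t p \<noteq> t (cyc_succ L (cyc_succ L p)))"

lemma cycle_square_coloringD:
  assumes "cycle_square_coloring L t" "p < L"
  shows "t (cyc_pred L p) \<noteq> t p" "t p \<noteq> t (cyc_succ L p)" "t (cyc_pred L p) \<noteq> t (cyc_succ L p)"
  using assms cyc_pred_lt[OF assms(2)] cyc_succ_pred[OF assms(2)]
  unfolding cycle_square_coloring_def by metis+

lemma cart_cycle_edge_iff:
  assumes "p < L" "q < L"
  shows "{(x, p), (y, q)} \<in> edges (cart X (cycle L)) \<longleftrightarrow>
    (x = y \<and> x \<in> verts X \<and> (q = cyc_succ L p \<or> q = cyc_pred L p)) \<or> (p = q \<and> {x, y} \<in> edges X)"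
  unfolding cart_edge_iff using cycle_edge_iff[OF assms] assms by auto

lemma weighted_adj_cycle_prod_matrix:
  fixes K :: "'x \<Rightarrow> 'x \<Rightarrow> 'f::field"
  assumes X: "simple_graph X" and K: "K \<in> invol_adj X" and L: "4 \<le> L"
    and t: "cycle_square_coloring L t"
  shows "weighted_adj (cart X (cycle L)) (cycle_prod_matrix (verts X) L t K)"
  unfolding weighted_adj_def adjacent_def
proof (intro conjI allI impI ballI)
  fix u v assume "u \<notin> verts (cart X (cycle L)) \<or> v \<notin> verts (cart X (cycle L))"
  then show "cycle_prod_matrix (verts X) L t K u v = 0" by (auto simp: cycle_prod_matrix_def split: prod.splits)
next
  fix u v assume "u \<in> verts (cart X (cycle L))" "v \<in> verts (cart X (cycle L))"
  then obtain x p y q where uv: "u = (x, p)" "v = (y, q)" "x \<in> verts X" "y \<in> verts X" "p < L" "q < L"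
    by auto
  note neq = cyc_succ_pred_distinct[OF uv(5)] and td = cycle_square_coloringD[OF t uv(5)]
  have "{u, v} \<in> edges (cart X (cycle L)) \<longleftrightarrow>
      (x = y \<and> (q = cyc_succ L p \<or> q = cyc_pred L p)) \<or> (p = q \<and> {x, y} \<in> edges X)"
    unfolding uv(1,2) cart_cycle_edge_iff[OF uv(5,6)] using uv(3) by blast
  then show "cycle_prod_matrix (verts X) L t K u v \<noteq> 0 \<longleftrightarrow> {u, v} \<in> edges (cart X (cycle L))"
    using uv neq L td invol_adjD(2)[OF K uv(3,4)] by (auto simp: cycle_prod_matrix_def)
qed

lemma sum_three:
  assumes "finite A" "{a, b, c} \<subseteq> A" "a \<noteq> b" "a \<noteq> c" "b \<noteq> c"
    and "\<And>q. q \<in> A \<Longrightarrow> q \<notin> {a, b, c} \<Longrightarrow> F q = 0"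
  shows "sum F A = F a + F b + F c"
proof -
  have "sum F A = sum F {a, b, c}" using assms by (intro sum.mono_neutral_right) auto
  then show ?thesis using assms(3-5) by (simp add: add.assoc)
qed

lemma cycle_prod_matrix_row:
  fixes K :: "'x \<Rightarrow> 'x \<Rightarrow> 'f::field" and f :: "'x \<times> nat \<Rightarrow> 'f"
  assumes fin: "finite V" and L: "3 \<le> L" and x: "x \<in> V" and p: "p < L"
  defines "s \<equiv> cyc_succ L p" and "r \<equiv> cyc_pred L p"
  shows "(\<Sum>v\<in>V \<times> {0..<L}. cycle_prod_matrix V L t K (x, p) v * f v) =
    (t r - t s) * (\<Sum>y\<in>V. K x y * f (y, p)) + (t p - t r) * f (x, s) + (t s - t p) * f (x, r)"
proof -
  let ?N = "cycle_prod_matrix V L t K"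
  have sr: "s < L" "r < L" "s \<noteq> p" "r \<noteq> p" "s \<noteq> r"
    using cyc_succ_lt cyc_pred_lt cyc_succ_pred_distinct p L unfolding s_def r_def by auto
  define F where "F q = (\<Sum>y\<in>V. ?N (x, p) (y, q) * f (y, q))" for q
  have "(\<Sum>v\<in>V \<times> {0..<L}. ?N (x, p) v * f v) = (\<Sum>q\<in>{0..<L}. F q)"
    unfolding F_def sum.cartesian_product' by (rule sum.swap)
  also have "\<dots> = F p + F s + F r"
  proof (rule sum_three)
    fix q assume "q \<in> {0..<L}" "q \<notin> {p, s, r}"
    then have "?N (x, p) (y, q) = 0" for y unfolding s_def r_def cycle_prod_matrix_def by auto
    then show "F q = 0" unfolding F_def by simp
  qed (use p sr in auto)
  also have "F p = (t r - t s) * (\<Sum>y\<in>V. K x y * f (y, p))"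
    unfolding F_def using x p unfolding cycle_prod_matrix_def r_def s_def
    by (simp add: sum_distrib_left ac_simps cong: sum.cong)
  also have "F s = (\<Sum>y\<in>V. if y = x then (t p - t r) * f (y, s) else 0)"
    unfolding F_def using x p sr unfolding cycle_prod_matrix_def r_def s_def by (intro sum.cong) auto
  also have "F r = (\<Sum>y\<in>V. if y = x then (t s - t p) * f (y, r) else 0)"
    unfolding F_def using x p sr unfolding cycle_prod_matrix_def r_def s_def by (intro sum.cong) auto
  finally show ?thesis using fin x by simp
qed

lemma cycle_prod_matrix_kernel:
  fixes K :: "'x \<Rightarrow> 'x \<Rightarrow> 'f::field"
  assumes fin: "finite V" and K: "involutory V K" and L: "even L" "4 \<le> L"
    and z: "z \<in> V" and x: "x \<in> V" and p: "p < L"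
  shows "(\<Sum>v\<in>V \<times> {0..<L}. cycle_prod_matrix V L t K (x, p) v * cycle_prod_null_vec K t (z, j) v) = 0"
proof -
  define s where "s = cyc_succ L p"
  define r where "r = cyc_pred L p"
  define \<sigma> where "\<sigma> q = (if j then t q else 1)" for q
  define w where "w (q :: nat) y = (if even q then (if y = z then 1 else 0) else K y z)" for q y
  have \<kappa>: "cycle_prod_null_vec K t (z, j) = (\<lambda>(y, q). \<sigma> q * w q y)"
    unfolding cycle_prod_null_vec_def \<sigma>_def w_def by auto
  have parity: "w s = w (Suc p)" "w r = w (Suc p)"
    using even_cyc_succ[OF L(1) p] even_cyc_pred[OF L(1) p] unfolding s_def r_def w_def by auto
  have K_w: "(\<Sum>y\<in>V. K x y * w p y) = w (Suc p) x"
  proof (cases "even p")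
    case True
    then show ?thesis using fin z unfolding w_def by (simp add: if_distrib[of "\<lambda>t. _ * t"] sum.delta' cong: if_cong)
  next
    case False
    then show ?thesis using K x z unfolding w_def involutory_def by simp
  qed
  have "(\<Sum>v\<in>V \<times> {0..<L}. cycle_prod_matrix V L t K (x, p) v * cycle_prod_null_vec K t (z, j) v)
      = (t r - t s) * (\<Sum>y\<in>V. K x y * (\<sigma> p * w p y)) + (t p - t r) * (\<sigma> s * w s x) + (t s - t p) * (\<sigma> r * w r x)"
    unfolding \<kappa> s_def r_def using cycle_prod_matrix_row[OF fin _ x p, where f = "\<lambda>(y, q). \<sigma> q * w q y"] L
    by simp
  also have "\<dots> = w (Suc p) x * ((t r - t s) * \<sigma> p + (t p - t r) * \<sigma> s + (t s - t p) * \<sigma> r)"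
    using K_w parity by (simp add: sum_distrib_left[symmetric] mult.left_commute algebra_simps)
  also have "\<dots> = 0" unfolding \<sigma>_def by (cases j) (simp_all add: algebra_simps)
  finally show ?thesis .
qed

lemma lin_indep_cycle_prod_null_vec:
  fixes K :: "'x \<Rightarrow> 'x \<Rightarrow> 'f::field"
  assumes fin: "finite V" and K: "involutory V K" and L: "2 \<le> L" and t01: "t 0 \<noteq> t 1"
  shows "lin_indep (V \<times> {0..<L}) (V \<times> UNIV) (cycle_prod_null_vec K t)"
  unfolding lin_indep_def
proof (intro allI impI)
  fix \<beta> :: "'x \<times> bool \<Rightarrow> 'f"
  assume h: "\<forall>v\<in>V \<times> {0..<L}. (\<Sum>z\<in>V \<times> UNIV. \<beta> z * cycle_prod_null_vec K t z v) = 0"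
  have layer0: "\<beta> (x, False) + t 0 * \<beta> (x, True) = 0" if x: "x \<in> V" for x
  proof -
    have "(\<Sum>z\<in>V \<times> UNIV. \<beta> z * cycle_prod_null_vec K t z (x, 0))
        = (\<Sum>y\<in>V. if y = x then t 0 * \<beta> (y, True) + \<beta> (y, False) else 0)"
      unfolding sum_times_UNIV_bool sum.distrib[symmetric] cycle_prod_null_vec_def
      by (intro sum.cong) (auto simp: mult.commute)
    then show ?thesis using h x L fin by (simp add: add.commute)
  qed
  define c where "c y = \<beta> (y, False) + t 1 * \<beta> (y, True)" for y
  have layer1: "(\<Sum>z\<in>V. K y z * c z) = 0" if y: "y \<in> V" for y
  proof -
    have "(\<Sum>z\<in>V \<times> UNIV. \<beta> z * cycle_prod_null_vec K t z (y, 1)) = (\<Sum>z\<in>V. K y z * c z)"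
      unfolding sum_times_UNIV_bool sum.distrib[symmetric] cycle_prod_null_vec_def c_def
      by (intro sum.cong) (auto simp: algebra_simps)
    then show ?thesis using h y L by simp
  qed
  have c0: "c x = 0" if "x \<in> V" for x by (rule involutory_kernel_eq_0[OF fin K _ that]) (use layer1 in blast)
  show "\<forall>z\<in>V \<times> UNIV. \<beta> z = 0"
  proof (clarify)
    fix x j assume x: "x \<in> V"
    have "(t 0 - t 1) * \<beta> (x, True) = (\<beta> (x, False) + t 0 * \<beta> (x, True)) - c x"
      unfolding c_def by (simp add: algebra_simps)
    also have "\<dots> = 0" using layer0[OF x] c0[OF x] by simp
    finally have "(t 0 - t 1) * \<beta> (x, True) = 0" .
    then have "\<beta> (x, True) = 0" using t01 by simp
    moreover then have "\<beta> (x, False) = 0" using layer0[OF x] by simp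
    ultimately show "\<beta> (x, j) = 0" by (cases j) simp_all
  qed
qed

theorem cycle_prod_forcing_set_card_ge:
  fixes K :: "'x \<Rightarrow> 'x \<Rightarrow> 'f::field" and t :: "nat \<Rightarrow> 'f"
  assumes X: "simple_graph X" and col: "bicoloring X c" and K: "K \<in> invol_adj X"
    and L: "even L" "4 \<le> L" and t: "cycle_square_coloring L t"
    and pm: "perfect_matching (cart X (cycle L)) M" and fs: "forcing_set (cart X (cycle L)) M S"
  shows "card (verts X) \<le> card S"
proof -
  have fin: "finite (verts X)" by (rule simple_graph_finite[OF X])
  have invK: "involutory (verts X) K" using K unfolding invol_adj_def by blast
  have "t 0 \<noteq> t 1" using t L unfolding cycle_square_coloring_def cyc_succ_def by force
  have "card (verts X \<times> (UNIV :: bool set)) \<le> 2 * card S"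
  proof (rule forcing_set_card_ge_nullity)
    show "simple_graph (cart X (cycle L))" using simple_graph_cart[OF X simple_graph_cycle] L by simp
    show "bicoloring (cart X (cycle L)) (\<lambda>(x, p). c x \<noteq> odd p)"
      by (rule bicoloring_cart[OF col bicoloring_cycle[OF L(1)]])
    show "weighted_adj (cart X (cycle L)) (cycle_prod_matrix (verts X) L t K)"
      by (rule weighted_adj_cycle_prod_matrix[OF X K L(2) t])
    show "\<forall>z\<in>verts X \<times> UNIV. \<forall>v\<in>verts (cart X (cycle L)).
        (\<Sum>u\<in>verts (cart X (cycle L)). cycle_prod_matrix (verts X) L t K v u * cycle_prod_null_vec K t z u) = 0"
      using cycle_prod_matrix_kernel[OF fin invK L] by auto
    show "lin_indep (verts (cart X (cycle L))) (verts X \<times> UNIV) (cycle_prod_null_vec K t)"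
      using lin_indep_cycle_prod_null_vec[OF fin invK _ \<open>t 0 \<noteq> t 1\<close>] L by simp
  qed (use fin pm fs in auto)
  then show ?thesis using fin by (simp add: card_cartesian_product)
qed

definition fibre_edge :: "nat \<Rightarrow> 'x \<Rightarrow> nat \<Rightarrow> ('x \<times> nat) set" where
  "fibre_edge L x q = {(x, q), (x, cyc_succ L q)}"

definition fibre_matching :: "nat \<Rightarrow> 'x set \<Rightarrow> ('x \<Rightarrow> bool) \<Rightarrow> ('x \<times> nat) set set" where
  "fibre_matching L V c = {fibre_edge L x q | x q. x \<in> V \<and> q < L \<and> odd q = c x}"

definition first_fibre_edges :: "nat \<Rightarrow> 'x set \<Rightarrow> ('x \<Rightarrow> bool) \<Rightarrow> ('x \<times> nat) set set" where
  "first_fibre_edges L V c = (\<lambda>x. fibre_edge L x (if c x then 1 else 0)) ` V"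

lemma fibre_edge_in_edges:
  assumes "x \<in> verts X" "q < L"
  shows "fibre_edge L x q \<in> edges (cart X (cycle L))"
  unfolding fibre_edge_def cart_cycle_edge_iff[OF assms(2) cyc_succ_lt[OF assms(2)]] using assms(1) by simp

lemma perfect_matching_fibre_matching:
  assumes L: "even L" "4 \<le> L"
  shows "perfect_matching (cart X (cycle L)) (fibre_matching L (verts X) c)"
  unfolding perfect_matching_def
proof (intro conjI ballI)
  show "fibre_matching L (verts X) c \<subseteq> edges (cart X (cycle L))"
    unfolding fibre_matching_def by (auto intro: fibre_edge_in_edges)
next
  fix v assume "v \<in> verts (cart X (cycle L))"
  then obtain x q where v: "v = (x, q)" "x \<in> verts X" "q < L" by auto
  have pred: "cyc_pred L q < L" "odd (cyc_pred L q) \<longleftrightarrow> \<not> odd q"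
    using cyc_pred_lt[OF v(3)] even_cyc_pred[OF L(1) v(3)] by auto
  define e where "e = (if odd q = c x then fibre_edge L x q else fibre_edge L x (cyc_pred L q))"
  show "\<exists>!e. e \<in> fibre_matching L (verts X) c \<and> v \<in> e"
  proof (rule ex1_edgeI)
    show "e \<in> fibre_matching L (verts X) c"
      unfolding e_def fibre_matching_def using v pred by auto
    show "v \<in> e" unfolding e_def fibre_edge_def using v cyc_succ_pred by auto
  next
    fix e' assume "e' \<in> fibre_matching L (verts X) c" "v \<in> e'"
    then obtain q' where q': "e' = fibre_edge L x q'" "q' < L" "odd q' = c x" "q = q' \<or> q = cyc_succ L q'"
      unfolding fibre_matching_def fibre_edge_def v by auto
    then show "e' = e"
      using cyc_pred_succ[OF q'(2)] even_cyc_succ[OF L(1) q'(2)] unfolding e_def by auto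
  qed
qed

text \<open>Going around the fibres, the matching is forced one layer at a time: a vertex \<open>(x, j)\<close>
  cannot be matched backwards, since \<open>(x, j - 1)\<close> and all \<open>(y, j)\<close> with \<open>y\<close> adjacent
  to \<open>x\<close> are already covered by forced edges.\<close>
lemma fibre_matching_forced:
  assumes X: "simple_graph X" and col: "bicoloring X c" and L: "even L" "4 \<le> L"
    and M': "perfect_matching (cart X (cycle L)) M'" and S: "first_fibre_edges L (verts X) c \<subseteq> M'"
  shows "x \<in> verts X \<Longrightarrow> j < L \<Longrightarrow> odd j = c x \<Longrightarrow> fibre_edge L x j \<in> M'"
proof (induction j arbitrary: x rule: less_induct)
  case (less j)
  have sg: "simple_graph (cart X (cycle L))" using simple_graph_cart[OF X simple_graph_cycle] L by simp
  show ?case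
  proof (cases "j < 2")
    case True
    then have "j = (if c x then 1 else 0)" using less.prems(3) by (auto simp: less_2_cases_iff)
    then show ?thesis using S less.prems(1) unfolding first_fibre_edges_def by blast
  next
    case False
    have j: "cyc_pred L j = j - 1" "cyc_succ L (j - 1) = j" "cyc_succ L (j - 2) = j - 1"
      using False less.prems(2) unfolding cyc_pred_def cyc_succ_def by auto
    have vx: "(x, j) \<in> verts (cart X (cycle L))" using less.prems by simp
    obtain y q where yq: "mate M' (x, j) = (y, q)" by fastforce
    have e: "{(x, j), (y, q)} \<in> M'" "y \<in> verts X" "q < L"
      using mate_edge[OF sg M' vx] mate_in_verts[OF sg M' vx] yq by auto
    have not_other: False if "e' \<in> M'" "(y, q) \<in> e'" "(x, j) \<notin> e'" for e'
      using perfect_matching_edge_unique[OF sg M' e(1) that(1)] that(2,3) by blast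
    have "{(x, j), (y, q)} \<in> edges (cart X (cycle L))" using e(1) M' unfolding perfect_matching_def by blast
    then have "(x = y \<and> (q = cyc_succ L j \<or> q = j - 1)) \<or> (j = q \<and> {x, y} \<in> edges X)"
      unfolding cart_cycle_edge_iff[OF less.prems(2) e(3)] j(1) by blast
    then consider "y = x" "q = cyc_succ L j" | "y = x" "q = j - 1" | "q = j" "{x, y} \<in> edges X"
      by blast
    then show ?thesis
    proof cases
      case 1
      then show ?thesis using e(1) unfolding fibre_edge_def by simp
    next
      case 2
      have "fibre_edge L x (j - 2) \<in> M'" using less.IH[of "j - 2" x] less.prems False by simp
      moreover have "(y, q) \<in> fibre_edge L x (j - 2)" using 2 j unfolding fibre_edge_def by simp
      moreover have "(x, j) \<notin> fibre_edge L x (j - 2)" using False j unfolding fibre_edge_def by auto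
      ultimately show ?thesis using not_other by blast
    next
      case 3
      then have "c y \<noteq> c x" using col unfolding bicoloring_def by (metis insert_commute)
      then have "fibre_edge L y (j - 1) \<in> M'" using less.IH[of "j - 1" y] less.prems False e(2) by auto
      moreover have "(y, q) \<in> fibre_edge L y (j - 1)" using 3 j unfolding fibre_edge_def by simp
      moreover have "(x, j) \<notin> fibre_edge L y (j - 1)"
        using 3(2) simple_graph_doubletonD[OF X] False unfolding fibre_edge_def by auto
      ultimately show ?thesis using not_other by blast
    qed
  qed
qed

lemma forcing_set_first_fibre_edges:
  assumes X: "simple_graph X" and col: "bicoloring X c" and L: "even L" "4 \<le> L"
  shows "forcing_set (cart X (cycle L)) (fibre_matching L (verts X) c) (first_fibre_edges L (verts X) c)"
  unfolding forcing_set_def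
proof (intro conjI allI impI)
  show "first_fibre_edges L (verts X) c \<subseteq> fibre_matching L (verts X) c"
  proof
    fix e assume "e \<in> first_fibre_edges L (verts X) c"
    then obtain x where "x \<in> verts X" "e = fibre_edge L x (if c x then 1 else 0)"
      unfolding first_fibre_edges_def by blast
    then show "e \<in> fibre_matching L (verts X) c"
      unfolding fibre_matching_def using L by (intro CollectI exI[of _ x] exI[of _ "if c x then 1 else 0"]) auto
  qed
next
  fix M' assume M': "perfect_matching (cart X (cycle L)) M' \<and> first_fibre_edges L (verts X) c \<subseteq> M'"
  then have "fibre_matching L (verts X) c \<subseteq> M'"
    using fibre_matching_forced[OF X col L] unfolding fibre_matching_def by blast
  moreover have "simple_graph (cart X (cycle L))" using simple_graph_cart[OF X simple_graph_cycle] L by simp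
  ultimately show "M' = fibre_matching L (verts X) c"
    using perfect_matching_subset_eq perfect_matching_fibre_matching[OF L] M' by blast
qed

theorem forcing_number_cycle_prod:
  fixes K :: "'x \<Rightarrow> 'x \<Rightarrow> 'f::field" and t :: "nat \<Rightarrow> 'f"
  assumes X: "simple_graph X" and col: "bicoloring X c" and K: "K \<in> invol_adj X"
    and L: "even L" "4 \<le> L" and t: "cycle_square_coloring L t"
  shows "forcing_number (cart X (cycle L)) = card (verts X)"
proof (rule antisym)
  have "forcing_number (cart X (cycle L)) \<le> card (first_fibre_edges L (verts X) c)"
    by (rule forcing_number_le[OF perfect_matching_fibre_matching[OF L] forcing_set_first_fibre_edges[OF X col L]])
  also have "\<dots> \<le> card (verts X)"
    unfolding first_fibre_edges_def by (rule card_image_le[OF simple_graph_finite[OF X]])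
  finally show "forcing_number (cart X (cycle L)) \<le> card (verts X)" .
next
  have "simple_graph (cart X (cycle L))" using simple_graph_cart[OF X simple_graph_cycle] L by simp
  then obtain M S where "perfect_matching (cart X (cycle L)) M" "forcing_set (cart X (cycle L)) M S"
      "card S = forcing_number (cart X (cycle L))"
    using forcing_number_attained perfect_matching_fibre_matching[OF L] by metis
  then show "card (verts X) \<le> forcing_number (cart X (cycle L))"
    using cycle_prod_forcing_set_card_ge[OF X col K L t] by metis
qed

text \<open>A proper coloring of the square of \<open>C\<^sub>L\<close>: colors \<open>0, 1, 2, 3\<close> periodically, except that
  when \<open>4\<close> does not divide \<open>L\<close> the last two positions get \<open>1, 2\<close>, so that the pattern closes up.\<close>
definition cycle_color :: "nat \<Rightarrow> nat \<Rightarrow> nat" where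
  "cycle_color L p = (if \<not> 4 dvd L \<and> L \<le> p + 2 then p + 3 - L else p mod 4)"

lemma even_ge_4_cases:
  fixes L :: nat
  assumes "even L" "4 \<le> L"
  obtains (div4) k where "L = 4 * k + 4" | (rem2) k where "L = 4 * k + 6"
proof -
  obtain m where m: "L = 2 * m" using assms(1) by blast
  show thesis
  proof (cases "even m")
    case True
    then obtain k where "m = 2 * k" by blast
    then show thesis using div4[of "k - 1"] m assms(2) by simp
  next
    case False
    then obtain k where "m = 2 * k + 1" using oddE by blast
    then show thesis using rem2[of "k - 1"] m assms(2) by simp
  qed
qed

lemma cycle_color_distinct:
  assumes L: "even L" "4 \<le> L" and p: "p < L"
  shows "cycle_color L p \<noteq> cycle_color L (cyc_succ L p) \<and>
    cycle_color L p \<noteq> cycle_color L (cyc_succ L (cyc_succ L p))"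
proof -
  have regular: "q mod 4 \<noteq> Suc q mod 4" "q mod 4 \<noteq> Suc (Suc q) mod 4" for q
    by (simp_all add: mod_Suc)
  from L show ?thesis
  proof (cases rule: even_ge_4_cases)
    case (div4 k)
    then consider "p + 2 < L" | "p = 4 * k + 2" | "p = 4 * k + 3" using p by linarith
    then show ?thesis
      using regular[of p] div4 unfolding cycle_color_def cyc_succ_def by cases (simp_all add: mod_Suc)
  next
    case (rem2 k)
    then have "\<not> 4 dvd L" by (simp add: dvd_eq_mod_eq_0)
    consider "p + 4 < L" | "p = 4 * k + 2" | "p = 4 * k + 3" | "p = 4 * k + 4" | "p = 4 * k + 5"
      using p rem2 by linarith
    then show ?thesis
      using regular[of p] rem2 \<open>\<not> 4 dvd L\<close> unfolding cycle_color_def cyc_succ_def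
      by cases (simp_all add: mod_Suc)
  qed
qed

lemma obtain_four_distinct:
  assumes "infinite (UNIV :: 'f set) \<or> 4 \<le> card (UNIV :: 'f set)"
  obtains h :: "nat \<Rightarrow> 'f" where "inj_on h {..<4}"
proof -
  obtain T :: "'f set" where T: "finite T" "card T = 4"
  proof (cases "finite (UNIV :: 'f set)")
    case True
    then show ?thesis using assms that obtain_subset_with_card_n by (metis finite_subset subset_UNIV)
  next
    case False
    then show ?thesis using that infinite_arbitrarily_large by blast
  qed
  then obtain h :: "nat \<Rightarrow> 'f" where "bij_betw h {0..<4} T" using ex_bij_betw_nat_finite by metis
  then show ?thesis using that by (metis bij_betw_def atLeast0LessThan)
qed

lemma obtain_cycle_square_coloring:
  assumes F: "infinite (UNIV :: 'f set) \<or> 4 \<le> card (UNIV :: 'f set)" and L: "even L" "4 \<le> L"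
  obtains t :: "nat \<Rightarrow> 'f" where "cycle_square_coloring L t"
proof -
  obtain h :: "nat \<Rightarrow> 'f" where h: "inj_on h {..<4}" using obtain_four_distinct[OF F] by blast
  have "cycle_color L p < 4" if "p < L" for p using that unfolding cycle_color_def by auto
  then have "cycle_square_coloring L (\<lambda>p. h (cycle_color L p))"
    unfolding cycle_square_coloring_def
    using cycle_color_distinct[OF L] cyc_succ_lt inj_onD[OF h] by (metis lessThan_iff)
  then show ?thesis using that by blast
qed

section \<open>Hypercube products\<close>

lemma obtain_nonzero_square_ne_1:
  assumes "infinite (UNIV :: 'f::field set) \<or> 4 \<le> card (UNIV :: 'f set)"
  obtains a :: "'f::field" where "a \<noteq> 0" "a * a \<noteq> 1"
proof -
  obtain h :: "nat \<Rightarrow> 'f" where h: "inj_on h {..<4}" using obtain_four_distinct[OF assms] by blast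
  have "\<not> h ` {..<4} \<subseteq> {0, 1, -1}"
  proof
    assume "h ` {..<4} \<subseteq> {0, 1, -1}"
    then have "card (h ` {..<4}) \<le> card {0, 1, -1 :: 'f}" by (intro card_mono) auto
    also have "\<dots> \<le> 3" by (simp add: card_insert_if)
    finally show False using card_image[OF h] by simp
  qed
  then obtain a :: 'f where "a \<notin> {0, 1, -1}" by blast
  then show ?thesis using that square_eq_1_iff[of a] by auto
qed

lemma bipartite_bicoloring:
  assumes "simple_graph G" "bipartite G"
  obtains c where "bicoloring G c"
proof -
  obtain X where X: "\<forall>e\<in>edges G. card (e \<inter> X) = 1" using assms(2) unfolding bipartite_def by blast
  have "(u \<in> X) \<noteq> (v \<in> X)" if "{u, v} \<in> edges G" for u v
    using X that simple_graph_doubletonD[OF assms(1) that]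
    by (cases "u \<in> X"; cases "v \<in> X") (auto dest: bspec[of _ _ "{u, v}"])
  then show ?thesis using that[of "\<lambda>u. u \<in> X"] unfolding bicoloring_def by blast
qed

lemma graph_iso_cart_hypercube_0:
  assumes G: "simple_graph G"
  shows "graph_iso fst (cart G (hypercube 0)) G"
proof (rule graph_isoI[OF simple_graph_cart[OF G simple_graph_hypercube] G])
  show "bij_betw fst (verts (cart G (hypercube 0))) (verts G)"
    by (rule bij_betw_byWitness[where f' = "\<lambda>g. (g, [])"]) auto
  fix u v assume "u \<in> verts (cart G (hypercube 0))" "v \<in> verts (cart G (hypercube 0))"
  then show "{fst u, fst v} \<in> edges G \<longleftrightarrow> {u, v} \<in> edges (cart G (hypercube 0))"
    by (auto simp: cart_edge_iff simple_graph_no_loop[OF simple_graph_hypercube])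
qed

lemma graph_iso_cart_hypercube_Suc:
  assumes G: "simple_graph G"
  shows "graph_iso (\<lambda>(g, xs). ((g, tl xs), hd xs)) (cart G (hypercube (Suc d))) (cart (cart G (hypercube d)) K2)"
proof (rule graph_isoI)
  show "simple_graph (cart G (hypercube (Suc d)))" by (rule simple_graph_cart[OF G simple_graph_hypercube])
  show "simple_graph (cart (cart G (hypercube d)) K2)"
    by (rule simple_graph_cart[OF simple_graph_cart[OF G simple_graph_hypercube] simple_graph_K2])
  show "bij_betw (\<lambda>(g, xs). ((g, tl xs), hd xs)) (verts (cart G (hypercube (Suc d)))) (verts (cart (cart G (hypercube d)) K2))"
    by (rule bij_betw_byWitness[where f' = "\<lambda>((g, xs), b). (g, b # xs)"]) (auto simp: length_Suc_conv)
  fix u v assume "u \<in> verts (cart G (hypercube (Suc d)))" "v \<in> verts (cart G (hypercube (Suc d)))"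
  then obtain g b xs g' b' ys where "u = (g, b # xs)" "v = (g', b' # ys)" "g \<in> verts G" "g' \<in> verts G"
      "length xs = d" "length ys = d"
    by (auto simp: length_Suc_conv)
  then show "{(case u of (g, xs) \<Rightarrow> ((g, tl xs), hd xs)), (case v of (g, xs) \<Rightarrow> ((g, tl xs), hd xs))}
      \<in> edges (cart (cart G (hypercube d)) K2) \<longleftrightarrow> {u, v} \<in> edges (cart G (hypercube (Suc d)))"
    by (auto simp: cart_edge_iff hypercube_edge_iff)
qed

lemma invol_adj_cart_hypercube:
  fixes A :: "'a \<Rightarrow> 'a \<Rightarrow> 'f::field" and a :: 'f
  assumes G: "simple_graph G" and A: "A \<in> invol_adj G" and a: "a \<noteq> 0" "a * a \<noteq> 1"
  shows "(invol_adj (cart G (hypercube d)) :: ('a \<times> bool list \<Rightarrow> 'a \<times> bool list \<Rightarrow> 'f) set) \<noteq> {}"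
proof (induction d)
  case 0
  show ?case using invol_adj_graph_iso[OF simple_graph_cart[OF G simple_graph_hypercube]
      graph_iso_cart_hypercube_0[OF G] A] by blast
next
  case (Suc d)
  then obtain B :: "'a \<times> bool list \<Rightarrow> 'a \<times> bool list \<Rightarrow> 'f" where "B \<in> invol_adj (cart G (hypercube d))"
    by blast
  then have "prism_invol_matrix a (verts (cart G (hypercube d))) B \<in> invol_adj (cart (cart G (hypercube d)) K2)"
    using invol_adj_prism[OF simple_graph_cart[OF G simple_graph_hypercube] _ a] by blast
  then show ?case using invol_adj_graph_iso[OF simple_graph_cart[OF G simple_graph_hypercube]
      graph_iso_cart_hypercube_Suc[OF G]] by blast
qed

lemma forcing_number_cart_hypercube_Suc:
  fixes A :: "'a \<Rightarrow> 'a \<Rightarrow> 'f::field" and a :: 'f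
  assumes G: "simple_graph G" and col: "bicoloring G c" and A: "A \<in> invol_adj G" and a: "a \<noteq> 0" "a * a \<noteq> 1"
  shows "2 * forcing_number (cart G (hypercube (Suc d))) = 2 ^ d * card (verts G)"
proof -
  let ?X = "cart G (hypercube d)"
  have X: "simple_graph ?X" by (rule simple_graph_cart[OF G simple_graph_hypercube])
  obtain B :: "'a \<times> bool list \<Rightarrow> 'a \<times> bool list \<Rightarrow> 'f" where B: "B \<in> invol_adj ?X"
    using invol_adj_cart_hypercube[OF G A a] by blast
  have "forcing_number (cart G (hypercube (Suc d))) = forcing_number (cart ?X K2)"
    using forcing_number_graph_iso[OF simple_graph_cart[OF X simple_graph_K2] simple_graph_cart[OF G simple_graph_hypercube]
        graph_iso_inv[OF _ graph_iso_cart_hypercube_Suc[OF G]] perfect_matching_rungs]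
      simple_graph_cart[OF G simple_graph_hypercube] by blast
  also have "2 * \<dots> = card (verts ?X)"
    by (rule forcing_number_prism[OF X bicoloring_cart[OF col bicoloring_hypercube] B])
  also have "\<dots> = 2 ^ d * card (verts G)"
    using card_verts_hypercube[of d] by (simp add: card_cartesian_product)
  finally show ?thesis .
qed

lemma forcing_number_cart_hypercube_cycle:
  fixes A :: "'a \<Rightarrow> 'a \<Rightarrow> 'f::field" and a :: 'f
  assumes G: "simple_graph G" and col: "bicoloring G c" and A: "A \<in> invol_adj G"
    and a: "a \<noteq> 0" "a * a \<noteq> 1" and F: "infinite (UNIV :: 'f set) \<or> 4 \<le> card (UNIV :: 'f set)"
    and k: "2 \<le> k"
  shows "forcing_number (cart (cart G (hypercube d)) (cycle (2 * k))) = 2 ^ d * card (verts G)"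
proof -
  have L: "even (2 * k)" "4 \<le> 2 * k" using k by auto
  obtain t :: "nat \<Rightarrow> 'f" where t: "cycle_square_coloring (2 * k) t"
    by (rule obtain_cycle_square_coloring[OF F L])
  obtain B :: "'a \<times> bool list \<Rightarrow> 'a \<times> bool list \<Rightarrow> 'f" where "B \<in> invol_adj (cart G (hypercube d))"
    using invol_adj_cart_hypercube[OF G A a] by blast
  then have "forcing_number (cart (cart G (hypercube d)) (cycle (2 * k))) = card (verts (cart G (hypercube d)))"
    by (rule forcing_number_cycle_prod[OF simple_graph_cart[OF G simple_graph_hypercube]
        bicoloring_cart[OF col bicoloring_hypercube] _ L t])
  then show ?thesis using card_verts_hypercube[of d] by (simp add: card_cartesian_product)
qed

theorem corollary2p2:
  fixes G :: "'a graph"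
  assumes "simple_graph G"
    and "bipartite G"
    and "infinite (UNIV :: 'f::field set) \<or> card (UNIV :: 'f set) \<ge> 4"
    and "(invol_adj G :: ('a \<Rightarrow> 'a \<Rightarrow> 'f) set) \<noteq> {}"
  shows "\<forall>d::nat. d \<ge> 1 \<longrightarrow>
     (invol_adj (cart G (hypercube d)) :: ('a \<times> bool list \<Rightarrow> 'a \<times> bool list \<Rightarrow> 'f) set) \<noteq> {} \<and>
     real (forcing_number (cart G (hypercube d))) = 2 powi (int d - 2) * real (card (verts G)) \<and>
     (\<forall>k::nat. k \<ge> 2 \<longrightarrow>
        forcing_number (cart (cart G (hypercube d)) (cycle (2 * k))) = 2 ^ d * card (verts G))"
proof (intro allI impI)
  fix d :: nat assume "1 \<le> d"
  then obtain d' where d: "d = Suc d'" by (cases d) auto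
  obtain A :: "'a \<Rightarrow> 'a \<Rightarrow> 'f" where A: "A \<in> invol_adj G" using assms(4) by blast
  obtain a :: 'f where a: "a \<noteq> 0" "a * a \<noteq> 1" by (rule obtain_nonzero_square_ne_1[OF assms(3)])
  obtain c where c: "bicoloring G c" by (rule bipartite_bicoloring[OF assms(1,2)])
  have "2 * forcing_number (cart G (hypercube d)) = 2 ^ d' * card (verts G)"
    unfolding d by (rule forcing_number_cart_hypercube_Suc[OF assms(1) c A a])
  then have "real (forcing_number (cart G (hypercube d))) = 2 ^ d' / 2 * real (card (verts G))"
    using arg_cong[of _ _ real] by fastforce
  moreover have "(2::real) powi (int d - 2) = 2 ^ d' / 2" using d by (simp add: power_int_diff)
  ultimately have "real (forcing_number (cart G (hypercube d))) = 2 powi (int d - 2) * real (card (verts G))"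
    by (simp only:)
  then show "(invol_adj (cart G (hypercube d)) :: ('a \<times> bool list \<Rightarrow> 'a \<times> bool list \<Rightarrow> 'f) set) \<noteq> {} \<and>
     real (forcing_number (cart G (hypercube d))) = 2 powi (int d - 2) * real (card (verts G)) \<and>
     (\<forall>k\<ge>2. forcing_number (cart (cart G (hypercube d)) (cycle (2 * k))) = 2 ^ d * card (verts G))"
    using invol_adj_cart_hypercube[OF assms(1) A a]
      forcing_number_cart_hypercube_cycle[OF assms(1) c A a assms(3)] by simp
qed

end
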